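(* Let $f:G\to H$ be a surjective group homomorphism with kernel $K$, and let $L\subset K$ be a subset whose normal closure in $G$ is $K$. Then $\ker\big(f^\#:\kappa G^\#\to\kappa H^\#\big)=L^\#$.
   Context: Let $\kappa$ be a field of characteristic $0$. For a group $G$, let $*:\kappa G\to\kappa G$ be the $\kappa$-linear map with $g^*=g^{-1}$ for $g\in G$, and $(\kappa G)^*$ its fixed points. $A_G$ is the quotient of $\kappa G$ by the two-sided ideal generated by all $ab-ba$ with $a\in\kappa G$, $b\in(\kappa G)^*$; $*$ descends to $A_G$, and $\kappa G^\#=\{x\in A_G:x^*=x\}$ (a commutative subring of the centre of $A_G$). Group elements are identified with their images in $A_G$, and $\bar x=\tfrac12(x+x^* )$ for $x\in A_G$. A group homomorphism $f:G\to H$ induces a ring homomorphism $A_G\to A_H$ commuting with $*$; $f^\#$ is its restriction to $\kappa G^\#\to\kappa H^\#$. For a subset $L\subset G$, $L^\#$ is the ideal of $\kappa G^\#$ generated by $\{\overline{xl}-\bar x : x\in A_G,\ l\in L\}$ (equivalently, by $\{\overline{bl}-\bar b: b\in B, l\in L\}$ for any generating set $B$ of $A_G$ as a $\kappa G^\#$-module). *)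

theory Defs
  imports "HOL-Algebra.Algebra"
begin

definition normal_closure :: "('g, 'm) monoid_scheme \<Rightarrow> 'g set \<Rightarrow> 'g set" where
  "normal_closure G L = \<Inter>{N. N \<lhd> G \<and> L \<subseteq> N}"

section \<open>The group algebra \<kappa>G (finitely supported functions G \<rightarrow> \<kappa>)\<close>

definition fsupp :: "('g \<Rightarrow> 'k::zero) \<Rightarrow> 'g set" where
  "fsupp a = {g. a g \<noteq> 0}"

definition grp_alg :: "('g, 'm) monoid_scheme \<Rightarrow> ('g \<Rightarrow> 'k::field) ring" where
  "grp_alg G =
    \<lparr>carrier = {a. finite (fsupp a) \<and> fsupp a \<subseteq> carrier G},
     Group.monoid.mult = (\<lambda>a b g. if g \<in> carrier G
                     then (\<Sum>h\<in>fsupp a. a h * b (inv\<^bsub>G\<^esub> h \<otimes>\<^bsub>G\<^esub> g)) else 0),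
     Group.monoid.one = (\<lambda>g. if g = \<one>\<^bsub>G\<^esub> then 1 else 0),
     Ring.ring.zero = (\<lambda>g. 0),
     Ring.ring.add = (\<lambda>a b g. a g + b g)\<rparr>"

definition grp_elt :: "'g \<Rightarrow> ('g \<Rightarrow> 'k::field)" where
  "grp_elt g = (\<lambda>h. if h = g then 1 else 0)"

definition grp_star :: "('g, 'm) monoid_scheme \<Rightarrow> ('g \<Rightarrow> 'k::field) \<Rightarrow> ('g \<Rightarrow> 'k)" where
  "grp_star G a = (\<lambda>g. if g \<in> carrier G then a (inv\<^bsub>G\<^esub> g) else 0)"

definition grp_alg_map ::
  "('g \<Rightarrow> 'h) \<Rightarrow> ('h, 'n) monoid_scheme \<Rightarrow> ('g \<Rightarrow> 'k::field) \<Rightarrow> ('h \<Rightarrow> 'k)" where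
  "grp_alg_map f H a = (\<lambda>h. if h \<in> carrier H then (\<Sum>g\<in>{g\<in>fsupp a. f g = h}. a g) else 0)"

definition comm_ideal :: "('g, 'm) monoid_scheme \<Rightarrow> ('g \<Rightarrow> 'k::field) set" where
  "comm_ideal G = genideal (grp_alg G)
     {(a \<otimes>\<^bsub>grp_alg G\<^esub> b) \<ominus>\<^bsub>grp_alg G\<^esub> (b \<otimes>\<^bsub>grp_alg G\<^esub> a) | a b.
        a \<in> carrier (grp_alg G) \<and> b \<in> carrier (grp_alg G) \<and> grp_star G b = b}"

definition A_alg :: "('g, 'm) monoid_scheme \<Rightarrow> ('g \<Rightarrow> 'k::field) set ring" where
  "A_alg G = grp_alg G Quot comm_ideal G"

definition A_cls :: "('g, 'm) monoid_scheme \<Rightarrow> ('g \<Rightarrow> 'k::field) \<Rightarrow> ('g \<Rightarrow> 'k) set" where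
  "A_cls G x = a_r_coset (grp_alg G) (comm_ideal G) x"

definition A_star :: "('g, 'm) monoid_scheme \<Rightarrow> ('g \<Rightarrow> 'k::field) set \<Rightarrow> ('g \<Rightarrow> 'k) set" where
  "A_star G U = A_cls G (grp_star G (SOME x. x \<in> U))"

definition A_bar :: "('g, 'm) monoid_scheme \<Rightarrow> ('g \<Rightarrow> 'k::field) set \<Rightarrow> ('g \<Rightarrow> 'k) set" where
  "A_bar G U = (let x = (SOME x. x \<in> U) in
                 A_cls G (\<lambda>g. (x g + grp_star G x g) / 2))"

definition sharp :: "('g, 'm) monoid_scheme \<Rightarrow> ('g \<Rightarrow> 'k::field) set set" where
  "sharp G = {U \<in> carrier (A_alg G). A_star G U = U}"

definition sharp_ring :: "('g, 'm) monoid_scheme \<Rightarrow> ('g \<Rightarrow> 'k::field) set ring" where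
  "sharp_ring G = (A_alg G)\<lparr>carrier := sharp G\<rparr>"

definition A_map :: "('g \<Rightarrow> 'h) \<Rightarrow> ('g, 'm) monoid_scheme \<Rightarrow> ('h, 'n) monoid_scheme
    \<Rightarrow> ('g \<Rightarrow> 'k::field) set \<Rightarrow> ('h \<Rightarrow> 'k) set" where
  "A_map f G H U = A_cls H (grp_alg_map f H (SOME x. x \<in> U))"

definition sharp_kernel :: "('g \<Rightarrow> 'h) \<Rightarrow> ('g, 'm) monoid_scheme \<Rightarrow> ('h, 'n) monoid_scheme
    \<Rightarrow> ('g \<Rightarrow> 'k::field) set set" where
  "sharp_kernel f G H =
     {U \<in> sharp G. (A_map f G H U :: ('h \<Rightarrow> 'k) set) = \<zero>\<^bsub>A_alg H\<^esub>}"

definition sharp_ideal :: "('g, 'm) monoid_scheme \<Rightarrow> 'g set \<Rightarrow> ('g \<Rightarrow> 'k::field) set set" where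
  "sharp_ideal G L = genideal (sharp_ring G)
     {A_bar G (U \<otimes>\<^bsub>A_alg G\<^esub> A_cls G (grp_elt l)) \<ominus>\<^bsub>A_alg G\<^esub> A_bar G U | U l.
        U \<in> carrier (A_alg G) \<and> l \<in> L}"

end

theory Submission
  imports Defs
begin

(*
  Every such class has a symmetric representative,
  and classes are computed through representatives throughout.

  Inclusion L^# \<subseteq> ker f^#: the kernel is an ideal of \<kappa>G^#, and each generator
  bar(x l) - bar(x) of L^# is killed because f(l) = 1.

  Inclusion ker f^# \<subseteq> L^#: fix any ideal J of \<kappa>G^# containing the generators of L^#.
  Let symJ be the set of x \<in> \<kappa>G whose symmetrisation bar(x) has its class in J, and core
  the largest two-sided ideal of \<kappa>G inside symJ.  Since bar(xy) \<equiv> bar(yx) modulo I_G, core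
  contains l - 1 for l \<in> L; hence N_core = {g. g - 1 \<in> core} is a normal subgroup containing
  L, hence containing K = ker f.  So core contains every g0 - g1 with f g0 = f g1, and these
  span the kernel of \<kappa>G \<rightarrow> \<kappa>H.  Therefore the image of core in \<kappa>H is an ideal containing
  I_H, and a symmetric x with f(x) \<in> I_H lies in core \<subseteq> symJ, i.e. its class lies in J.
  Taking J = L^# ends the proof.
*)

text \<open>An ideal criterion avoiding the additive-subgroup formalism.\<close>

lemma (in ring) idealI_closed:
  assumes "J \<subseteq> carrier R" "\<zero> \<in> J" "\<And>a b. a \<in> J \<Longrightarrow> b \<in> J \<Longrightarrow> a \<oplus> b \<in> J"
    "\<And>a. a \<in> J \<Longrightarrow> \<ominus> a \<in> J"
    "\<And>a x. a \<in> J \<Longrightarrow> x \<in> carrier R \<Longrightarrow> x \<otimes> a \<in> J"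
    "\<And>a x. a \<in> J \<Longrightarrow> x \<in> carrier R \<Longrightarrow> a \<otimes> x \<in> J"
  shows "ideal J R"
proof (rule idealI[OF ring_axioms])
  show "subgroup J (add_monoid R)"
    by (rule add.subgroupI) (use assms in \<open>auto simp: a_inv_def[symmetric]\<close>)
qed (use assms in auto)

text \<open>Closure properties of an ideal, named so as not to clash with those of the ambient ring.\<close>

lemma (in ideal) I_zero_closed: "\<zero> \<in> I"
  by simp

lemma (in ideal) I_add_closed: "a \<in> I \<Longrightarrow> b \<in> I \<Longrightarrow> a \<oplus> b \<in> I"
  by simp

lemma (in ideal) I_neg_closed: "a \<in> I \<Longrightarrow> \<ominus> a \<in> I"
  by simp

lemma (in ideal) I_minus_closed: "a \<in> I \<Longrightarrow> b \<in> I \<Longrightarrow> a \<ominus> b \<in> I"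
  by (simp add: a_minus_def)

context ideal
begin

lemma quot_carrier: "carrier (R Quot I) = {I +> x | x. x \<in> carrier R}"
  by (auto simp: FactRing_def A_RCOSETS_def')

lemma quot_add: "x \<in> carrier R \<Longrightarrow> y \<in> carrier R \<Longrightarrow> (I +> x) \<oplus>\<^bsub>R Quot I\<^esub> (I +> y) = I +> (x \<oplus> y)"
  by (simp add: FactRing_def a_rcos_sum)

lemma quot_mult: "x \<in> carrier R \<Longrightarrow> y \<in> carrier R \<Longrightarrow> (I +> x) \<otimes>\<^bsub>R Quot I\<^esub> (I +> y) = I +> (x \<otimes> y)"
  by (simp add: FactRing_def rcoset_mult_add)

lemma quot_zero: "\<zero>\<^bsub>R Quot I\<^esub> = I"
  by (simp add: FactRing_def)

lemma quot_one: "\<one>\<^bsub>R Quot I\<^esub> = I +> \<one>"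
  by (simp add: FactRing_def)

lemma quot_eq_iff: "x \<in> carrier R \<Longrightarrow> y \<in> carrier R \<Longrightarrow> (I +> x = I +> y) = (x \<ominus> y \<in> I)"
  using quotient_eq_iff_same_a_r_cos[OF is_ideal] by simp

lemma quot_zero_iff:
  assumes x: "x \<in> carrier R"
  shows "(I +> x = I) = (x \<in> I)"
proof -
  have "I = I +> \<zero>" by (simp add: a_rcos_const)
  hence "(I +> x = I) = (I +> x = I +> \<zero>)" by simp
  also have "\<dots> = (x \<ominus> \<zero> \<in> I)" by (rule quot_eq_iff[OF x zero_closed])
  also have "\<dots> = (x \<in> I)" using x by (simp add: minus_eq)
  finally show ?thesis .
qed

lemma quot_cls_closed: "x \<in> carrier R \<Longrightarrow> I +> x \<in> carrier (R Quot I)"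
  using quot_carrier by auto

lemma quot_neg:
  assumes x: "x \<in> carrier R"
  shows "\<ominus>\<^bsub>R Quot I\<^esub> (I +> x) = I +> (\<ominus> x)"
proof -
  interpret Q: ring "R Quot I" by (rule quotient_is_ring)
  show ?thesis
    by (rule Q.minus_equality) (use x in \<open>simp_all add: quot_add quot_cls_closed quot_zero a_rcos_const l_neg\<close>)
qed

lemma quot_minus: "x \<in> carrier R \<Longrightarrow> y \<in> carrier R \<Longrightarrow> (I +> x) \<ominus>\<^bsub>R Quot I\<^esub> (I +> y) = I +> (x \<ominus> y)"
  by (simp add: a_minus_def quot_neg quot_add)

lemma quot_some_rep:
  assumes "U \<in> carrier (R Quot I)"
  shows "(SOME x. x \<in> U) \<in> carrier R" "I +> (SOME x. x \<in> U) = U"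
proof -
  obtain x where x: "x \<in> carrier R" "U = I +> x" using assms quot_carrier by auto
  have "x \<in> U" using x a_rcos_self by simp
  hence s: "(SOME x. x \<in> U) \<in> U" by (rule someI)
  thus "(SOME x. x \<in> U) \<in> carrier R" using x a_elemrcos_carrier by simp
  show "I +> (SOME x. x \<in> U) = U" using s x a_repr_independence' by simp
qed

end

text \<open>The ring identity behind "symmetrisation is a trace modulo I_G": writing
  x' = x*, y' = y*, the difference xy + y'x' - (yx + x'y') is a sum of commutators
  with the symmetric elements y + y' and x + x'.\<close>

lemma (in ring) commutator_trace_identity:
  assumes "x \<in> carrier R" "y \<in> carrier R" "x' \<in> carrier R" "y' \<in> carrier R"
  shows "x\<otimes>y \<oplus> y'\<otimes>x' \<ominus> (y\<otimes>x \<oplus> x'\<otimes>y') =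
    ((y\<oplus>y')\<otimes>(x\<oplus>x') \<ominus> (x\<oplus>x')\<otimes>(y\<oplus>y')) \<oplus> (x\<otimes>(y\<oplus>y') \<ominus> (y\<oplus>y')\<otimes>x)
      \<ominus> (y\<otimes>(x\<oplus>x') \<ominus> (x\<oplus>x')\<otimes>y)"
  using assms by algebra

text \<open>Identities for elements of the form b - 1 (b a group element below), used to show that
  {g. g - 1 \<in> C} is a normal subgroup whenever C is a two-sided ideal.\<close>

lemma (in ring) mult_minus_one: "u \<in> carrier R \<Longrightarrow> e \<in> carrier R \<Longrightarrow> u \<otimes> (e \<ominus> \<one>) = u \<otimes> e \<ominus> u"
  by (simp add: a_minus_def r_distr r_minus)

lemma (in ring) mult_minus_one_decomp:
  "A \<in> carrier R \<Longrightarrow> B \<in> carrier R \<Longrightarrow> A\<otimes>B \<ominus> \<one> = A\<otimes>(B \<ominus> \<one>) \<oplus> (A \<ominus> \<one>)"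
  by (simp add: mult_minus_one) algebra

lemma (in ring) neg_mult_minus_one:
  "A \<in> carrier R \<Longrightarrow> B \<in> carrier R \<Longrightarrow> \<ominus>(B\<otimes>(A \<ominus> \<one>)) = B \<ominus> B\<otimes>A"
  by (simp add: mult_minus_one) algebra

lemma (in ring) conj_minus_one:
  "B \<in> carrier R \<Longrightarrow> C \<in> carrier R \<Longrightarrow> D \<in> carrier R \<Longrightarrow> C\<otimes>(B \<ominus> \<one>)\<otimes>D = C\<otimes>B\<otimes>D \<ominus> C\<otimes>D"
  by algebra

lemma (in ring) minus_add_cancel: "x \<in> carrier R \<Longrightarrow> d \<in> carrier R \<Longrightarrow> (x \<ominus> d) \<oplus> d = x"
  by algebra

section \<open>The group algebra \<kappa>G\<close>

lemma ga_carrier: "carrier (grp_alg G) = {a. finite (fsupp a) \<and> fsupp a \<subseteq> carrier G}"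
  by (simp add: grp_alg_def)

lemma ga_add: "a \<oplus>\<^bsub>grp_alg G\<^esub> b = (\<lambda>g. a g + b g)"
  by (simp add: grp_alg_def)

lemma ga_add_apply: "(a \<oplus>\<^bsub>grp_alg G\<^esub> b) g = a g + b g"
  by (simp add: grp_alg_def)

lemma ga_zero: "\<zero>\<^bsub>grp_alg G\<^esub> = (\<lambda>g. 0)"
  by (simp add: grp_alg_def)

lemma ga_one: "\<one>\<^bsub>grp_alg G\<^esub> = grp_elt \<one>\<^bsub>G\<^esub>"
  by (simp add: grp_alg_def grp_elt_def)

lemma ga_mult: "a \<otimes>\<^bsub>grp_alg G\<^esub> b = (\<lambda>g. if g \<in> carrier G
                     then (\<Sum>h\<in>fsupp a. a h * b (inv\<^bsub>G\<^esub> h \<otimes>\<^bsub>G\<^esub> g)) else 0)"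
  by (simp add: grp_alg_def)

lemma ga_out: "a \<in> carrier (grp_alg G) \<Longrightarrow> g \<notin> carrier G \<Longrightarrow> a g = 0"
  by (auto simp: ga_carrier fsupp_def)

lemma ga_memI:
  "finite S \<Longrightarrow> S \<subseteq> carrier G \<Longrightarrow> (\<And>g. g \<notin> S \<Longrightarrow> a g = 0) \<Longrightarrow> a \<in> carrier (grp_alg G)"
  unfolding ga_carrier fsupp_def by (auto intro: finite_subset)

lemma ga_eqI:
  "a \<in> carrier (grp_alg G) \<Longrightarrow> b \<in> carrier (grp_alg G) \<Longrightarrow> (\<And>g. g \<in> carrier G \<Longrightarrow> a g = b g) \<Longrightarrow> a = b"
  by (rule ext) (metis ga_out)

text \<open>Scalar multiplication, and the symmetrisation bar(x) = (x + x*)/2 on \<kappa>G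
  (the operation that A_bar performs on a representative).\<close>

definition ga_scale :: "'k::field \<Rightarrow> ('g \<Rightarrow> 'k) \<Rightarrow> ('g \<Rightarrow> 'k)" where
  "ga_scale c a = (\<lambda>g. c * a g)"

definition sym_part :: "('g, 'm) monoid_scheme \<Rightarrow> ('g \<Rightarrow> 'k::field) \<Rightarrow> ('g \<Rightarrow> 'k)" where
  "sym_part G x = ga_scale (1/2) (x \<oplus>\<^bsub>grp_alg G\<^esub> grp_star G x)"

lemma ga_scale_apply: "ga_scale c a g = c * a g"
  by (simp add: ga_scale_def)

lemma grp_star_apply: "grp_star G a g = (if g \<in> carrier G then a (inv\<^bsub>G\<^esub> g) else 0)"
  by (simp add: grp_star_def)

lemma sharp_ring_simps:
  "carrier (sharp_ring G) = sharp G"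
  "U \<oplus>\<^bsub>sharp_ring G\<^esub> V = U \<oplus>\<^bsub>A_alg G\<^esub> V"
  "U \<otimes>\<^bsub>sharp_ring G\<^esub> V = U \<otimes>\<^bsub>A_alg G\<^esub> V"
  "\<zero>\<^bsub>sharp_ring G\<^esub> = \<zero>\<^bsub>A_alg G\<^esub>"
  by (simp_all add: sharp_ring_def)

context fixes G :: "('g,'m) monoid_scheme" (structure) assumes grp: "group G"
begin

interpretation group G by (rule grp)

lemma mult_inv_mult_cancel [simp]: "x \<in> carrier G \<Longrightarrow> y \<in> carrier G \<Longrightarrow> x \<otimes> (inv x \<otimes> y) = y"
  by (simp add: m_assoc[symmetric])

lemma inv_mult_mult_cancel [simp]: "x \<in> carrier G \<Longrightarrow> y \<in> carrier G \<Longrightarrow> inv x \<otimes> (x \<otimes> y) = y"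
  by (simp add: m_assoc[symmetric])

text \<open>The convolution product may be summed over any finite superset of the support of the
  left factor, or, reindexed by h \<mapsto> g h\<inverse>, over one of the right factor.\<close>

lemma ga_mult_apply:
  assumes a: "a \<in> carrier (grp_alg G)" and g: "g \<in> carrier G" and S: "finite S" "fsupp a \<subseteq> S"
  shows "(a \<otimes>\<^bsub>grp_alg G\<^esub> b) g = (\<Sum>h\<in>S. a h * b (inv h \<otimes> g))"
  unfolding ga_mult using g S by (auto intro!: sum.mono_neutral_left simp: fsupp_def)

lemma ga_mult_apply_right:
  assumes a: "a \<in> carrier (grp_alg G)" and b: "b \<in> carrier (grp_alg G)" and g: "g \<in> carrier G"
    and T: "finite T" "fsupp b \<subseteq> T" "T \<subseteq> carrier G"
  shows "(a \<otimes>\<^bsub>grp_alg G\<^esub> b) g = (\<Sum>k\<in>T. a (g \<otimes> inv k) * b k)"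
proof -
  let ?S = "(\<lambda>k. g \<otimes> inv k) ` T \<union> fsupp a"
  have fa: "finite (fsupp a)" using a by (simp add: ga_carrier)
  have "(a \<otimes>\<^bsub>grp_alg G\<^esub> b) g = (\<Sum>h\<in>?S. a h * b (inv h \<otimes> g))"
    by (rule ga_mult_apply[OF a g]) (use T fa in auto)
  also have "\<dots> = (\<Sum>h\<in>(\<lambda>k. g \<otimes> inv k) ` T. a h * b (inv h \<otimes> g))"
  proof (rule sum.mono_neutral_right)
    show "\<forall>i\<in>?S - (\<lambda>k. g \<otimes> inv k) ` T. a i * b (inv i \<otimes> g) = 0"
    proof
      fix i assume i: "i \<in> ?S - (\<lambda>k. g \<otimes> inv k) ` T"
      show "a i * b (inv i \<otimes> g) = 0"
      proof (cases "a i = 0")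
        case False
        hence ic: "i \<in> carrier G" using a by (auto simp: ga_carrier fsupp_def)
        have "inv i \<otimes> g \<notin> T"
        proof
          assume "inv i \<otimes> g \<in> T"
          moreover have "g \<otimes> inv (inv i \<otimes> g) = i" using ic g
            by (simp add: inv_mult_group m_assoc)
          ultimately show False using i by (metis DiffD2 image_eqI)
        qed
        hence "b (inv i \<otimes> g) = 0" using T by (auto simp: fsupp_def)
        thus ?thesis by simp
      qed simp
    qed
  qed (use T fa in auto)
  also have "\<dots> = (\<Sum>k\<in>T. a (g \<otimes> inv k) * b (inv (g \<otimes> inv k) \<otimes> g))"
  proof -
    have "inj_on (\<lambda>k. g \<otimes> inv k) T"
      by (rule inj_onI) (metis T(3) g inv_closed inv_inv l_cancel subsetD)
    thus ?thesis by (simp add: sum.reindex)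
  qed
  also have "\<dots> = (\<Sum>k\<in>T. a (g \<otimes> inv k) * b k)"
    by (rule sum.cong) (use T g in \<open>auto simp: inv_mult_group m_assoc\<close>)
  finally show ?thesis .
qed

lemma fsupp_ga_mult:
  assumes a: "a \<in> carrier (grp_alg G :: ('g \<Rightarrow> 'k::field) ring)" and b: "b \<in> carrier (grp_alg G)"
  shows "fsupp (a \<otimes>\<^bsub>grp_alg G\<^esub> b) \<subseteq> (\<lambda>(x,y). x \<otimes> y) ` (fsupp a \<times> fsupp b)"
proof
  let ?S = "(\<lambda>(x,y). x \<otimes> y) ` (fsupp a \<times> fsupp b)"
  have fa: "fsupp a \<subseteq> carrier G" using a by (auto simp: ga_carrier)
  fix g assume g: "g \<in> fsupp (a \<otimes>\<^bsub>grp_alg G\<^esub> b)"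
  hence gc: "g \<in> carrier G" by (auto simp: fsupp_def ga_mult split: if_splits)
  from g have "(\<Sum>h\<in>fsupp a. a h * b (inv h \<otimes> g)) \<noteq> 0"
    by (simp add: fsupp_def ga_mult gc)
  then obtain h where h: "h \<in> fsupp a" "a h * b (inv h \<otimes> g) \<noteq> 0"
    by (rule sum.not_neutral_contains_not_neutral)
  hence hc: "h \<in> carrier G" using fa by auto
  have "inv h \<otimes> g \<in> fsupp b" using h by (auto simp: fsupp_def)
  hence "h \<otimes> (inv h \<otimes> g) \<in> ?S" using h by force
  thus "g \<in> ?S" using hc gc by simp
qed

lemma ga_mult_closed:
  assumes a: "a \<in> carrier (grp_alg G :: ('g \<Rightarrow> 'k::field) ring)" and b: "b \<in> carrier (grp_alg G)"
  shows "a \<otimes>\<^bsub>grp_alg G\<^esub> b \<in> carrier (grp_alg G)"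
proof (rule ga_memI)
  show "finite ((\<lambda>(x,y). x \<otimes> y) ` (fsupp a \<times> fsupp b))"
    "(\<lambda>(x,y). x \<otimes> y) ` (fsupp a \<times> fsupp b) \<subseteq> carrier G"
    using a b by (auto simp: ga_carrier)
qed (use fsupp_ga_mult[OF a b] in \<open>auto simp: fsupp_def\<close>)

lemma ga_add_closed:
  assumes a: "a \<in> carrier (grp_alg G)" and b: "b \<in> carrier (grp_alg G)"
  shows "a \<oplus>\<^bsub>grp_alg G\<^esub> b \<in> carrier (grp_alg G)"
  apply (rule ga_memI[of "fsupp a \<union> fsupp b"])
  using a b by (auto simp: ga_carrier ga_add fsupp_def)

lemma ga_mult_assoc:
  assumes a: "a \<in> carrier (grp_alg G)" and b: "b \<in> carrier (grp_alg G)" and c: "c \<in> carrier (grp_alg G)"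
  shows "(a \<otimes>\<^bsub>grp_alg G\<^esub> b) \<otimes>\<^bsub>grp_alg G\<^esub> c = a \<otimes>\<^bsub>grp_alg G\<^esub> (b \<otimes>\<^bsub>grp_alg G\<^esub> c)"
proof (rule ga_eqI)
  show "(a \<otimes>\<^bsub>grp_alg G\<^esub> b) \<otimes>\<^bsub>grp_alg G\<^esub> c \<in> carrier (grp_alg G)"
    using a b c by (simp add: ga_mult_closed)
  show "a \<otimes>\<^bsub>grp_alg G\<^esub> (b \<otimes>\<^bsub>grp_alg G\<^esub> c) \<in> carrier (grp_alg G)"
    using a b c by (simp add: ga_mult_closed)
  fix g assume g: "g \<in> carrier G"
  have fa: "finite (fsupp a)" "fsupp a \<subseteq> carrier G" using a by (auto simp: ga_carrier)
  have fc: "finite (fsupp c)" "fsupp c \<subseteq> carrier G" using c by (auto simp: ga_carrier)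
  have "((a \<otimes>\<^bsub>grp_alg G\<^esub> b) \<otimes>\<^bsub>grp_alg G\<^esub> c) g
      = (\<Sum>m\<in>fsupp c. (a \<otimes>\<^bsub>grp_alg G\<^esub> b) (g \<otimes> inv m) * c m)"
    by (rule ga_mult_apply_right) (use a b c g fc ga_mult_closed in auto)
  also have "\<dots> = (\<Sum>m\<in>fsupp c. (\<Sum>k\<in>fsupp a. a k * b (inv k \<otimes> (g \<otimes> inv m))) * c m)"
    by (rule sum.cong[OF refl], subst ga_mult_apply[OF a _ fa(1)]) (use g fc in auto)
  also have "\<dots> = (\<Sum>m\<in>fsupp c. \<Sum>k\<in>fsupp a. a k * (b (inv k \<otimes> (g \<otimes> inv m)) * c m))"
    by (simp add: sum_distrib_right mult.assoc)
  also have "\<dots> = (\<Sum>k\<in>fsupp a. a k * (\<Sum>m\<in>fsupp c. b (inv k \<otimes> (g \<otimes> inv m)) * c m))"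
    by (subst sum.swap) (simp add: sum_distrib_left)
  also have "\<dots> = (\<Sum>k\<in>fsupp a. a k * (b \<otimes>\<^bsub>grp_alg G\<^esub> c) (inv k \<otimes> g))"
  proof (rule sum.cong[OF refl])
    fix k assume k: "k \<in> fsupp a"
    hence kc: "k \<in> carrier G" using fa by auto
    show "a k * (\<Sum>m\<in>fsupp c. b (inv k \<otimes> (g \<otimes> inv m)) * c m) = a k * (b \<otimes>\<^bsub>grp_alg G\<^esub> c) (inv k \<otimes> g)"
    proof -
      have "(b \<otimes>\<^bsub>grp_alg G\<^esub> c) (inv k \<otimes> g) = (\<Sum>m\<in>fsupp c. b (inv k \<otimes> g \<otimes> inv m) * c m)"
        by (rule ga_mult_apply_right[OF b c _ fc(1) _ fc(2)]) (use g kc in auto)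
      also have "\<dots> = (\<Sum>m\<in>fsupp c. b (inv k \<otimes> (g \<otimes> inv m)) * c m)"
      proof (rule sum.cong[OF refl])
        fix m assume "m \<in> fsupp c"
        hence "m \<in> carrier G" using fc by auto
        thus "b (inv k \<otimes> g \<otimes> inv m) * c m = b (inv k \<otimes> (g \<otimes> inv m)) * c m"
          using g kc by (simp add: m_assoc)
      qed
      finally show ?thesis by simp
    qed
  qed
  also have "\<dots> = (a \<otimes>\<^bsub>grp_alg G\<^esub> (b \<otimes>\<^bsub>grp_alg G\<^esub> c)) g"
    by (rule ga_mult_apply[OF a g fa(1), symmetric]) simp
  finally show "((a \<otimes>\<^bsub>grp_alg G\<^esub> b) \<otimes>\<^bsub>grp_alg G\<^esub> c) g = (a \<otimes>\<^bsub>grp_alg G\<^esub> (b \<otimes>\<^bsub>grp_alg G\<^esub> c)) g" .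
qed

lemma grp_elt_closed: "g \<in> carrier G \<Longrightarrow> grp_elt g \<in> carrier (grp_alg G)"
  by (rule ga_memI[of "{g}"]) (auto simp: grp_elt_def)

lemma fsupp_grp_elt: "fsupp (grp_elt g :: 'g \<Rightarrow> 'k::field) = {g}"
  by (auto simp: fsupp_def grp_elt_def)

lemma grp_elt_mult_apply:
  assumes g: "g \<in> carrier G" and b: "b \<in> carrier (grp_alg G)" and x: "x \<in> carrier G"
  shows "(grp_elt g \<otimes>\<^bsub>grp_alg G\<^esub> b) x = b (inv g \<otimes> x)"
  by (subst ga_mult_apply[OF grp_elt_closed[OF g] x, of "{g}"]) (auto simp: fsupp_def grp_elt_def)

lemma mult_grp_elt_apply:
  assumes g: "g \<in> carrier G" and a: "a \<in> carrier (grp_alg G)" and x: "x \<in> carrier G"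
  shows "(a \<otimes>\<^bsub>grp_alg G\<^esub> grp_elt g) x = a (x \<otimes> inv g)"
  by (subst ga_mult_apply_right[OF a grp_elt_closed[OF g] x, of "{g}"]) (auto simp: fsupp_def grp_elt_def g)

lemma grp_elt_mult:
  assumes g: "g \<in> carrier G" and h: "h \<in> carrier G"
  shows "grp_elt g \<otimes>\<^bsub>grp_alg G\<^esub> grp_elt h = (grp_elt (g \<otimes> h) :: 'g \<Rightarrow> 'k::field)"
proof (rule ga_eqI)
  fix x assume x: "x \<in> carrier G"
  show "(grp_elt g \<otimes>\<^bsub>grp_alg G\<^esub> grp_elt h) x = (grp_elt (g \<otimes> h) :: 'g \<Rightarrow> 'k) x"
    using g h x by (simp add: grp_elt_mult_apply grp_elt_closed) (simp add: grp_elt_def inv_solve_left')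
qed (use g h in \<open>simp_all add: grp_elt_closed ga_mult_closed\<close>)

lemma ga_l_distr:
  assumes x: "x \<in> carrier (grp_alg G :: ('g \<Rightarrow> 'k::field) ring)"
    and y: "y \<in> carrier (grp_alg G)" and z: "z \<in> carrier (grp_alg G)"
  shows "(x \<oplus>\<^bsub>grp_alg G\<^esub> y) \<otimes>\<^bsub>grp_alg G\<^esub> z = x \<otimes>\<^bsub>grp_alg G\<^esub> z \<oplus>\<^bsub>grp_alg G\<^esub> y \<otimes>\<^bsub>grp_alg G\<^esub> z"
proof (rule ga_eqI)
  have fz: "finite (fsupp z)" "fsupp z \<subseteq> carrier G" using z by (auto simp: ga_carrier)
  fix g assume g: "g \<in> carrier G"
  show "((x \<oplus>\<^bsub>grp_alg G\<^esub> y) \<otimes>\<^bsub>grp_alg G\<^esub> z) g = (x \<otimes>\<^bsub>grp_alg G\<^esub> z \<oplus>\<^bsub>grp_alg G\<^esub> y \<otimes>\<^bsub>grp_alg G\<^esub> z) g"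
    using ga_mult_apply_right[OF ga_add_closed[OF x y] z g fz(1) order.refl fz(2)]
      ga_mult_apply_right[OF x z g fz(1) order.refl fz(2)] ga_mult_apply_right[OF y z g fz(1) order.refl fz(2)]
    by (simp add: ga_add_apply sum.distrib distrib_right)
qed (use x y z in \<open>auto simp: ga_add_closed ga_mult_closed\<close>)

lemma ga_r_distr:
  assumes x: "x \<in> carrier (grp_alg G :: ('g \<Rightarrow> 'k::field) ring)"
    and y: "y \<in> carrier (grp_alg G)" and z: "z \<in> carrier (grp_alg G)"
  shows "z \<otimes>\<^bsub>grp_alg G\<^esub> (x \<oplus>\<^bsub>grp_alg G\<^esub> y) = z \<otimes>\<^bsub>grp_alg G\<^esub> x \<oplus>\<^bsub>grp_alg G\<^esub> z \<otimes>\<^bsub>grp_alg G\<^esub> y"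
proof (rule ga_eqI)
  have fz: "finite (fsupp z)" using z by (auto simp: ga_carrier)
  fix g assume g: "g \<in> carrier G"
  show "(z \<otimes>\<^bsub>grp_alg G\<^esub> (x \<oplus>\<^bsub>grp_alg G\<^esub> y)) g = (z \<otimes>\<^bsub>grp_alg G\<^esub> x \<oplus>\<^bsub>grp_alg G\<^esub> z \<otimes>\<^bsub>grp_alg G\<^esub> y) g"
    using ga_mult_apply[OF z g fz order.refl]
    by (simp add: ga_add_apply sum.distrib distrib_left)
qed (use x y z in \<open>auto simp: ga_add_closed ga_mult_closed\<close>)

lemma ring_grp_alg: "ring (grp_alg G :: ('g \<Rightarrow> 'k::field) ring)"
proof (rule ringI)
  show "abelian_group (grp_alg G :: ('g \<Rightarrow> 'k::field) ring)"
  proof (rule abelian_groupI)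
    fix x assume x: "x \<in> carrier (grp_alg G :: ('g \<Rightarrow> 'k::field) ring)"
    show "\<exists>y\<in>carrier (grp_alg G). y \<oplus>\<^bsub>grp_alg G\<^esub> x = \<zero>\<^bsub>grp_alg G\<^esub>"
      by (rule bexI[of _ "\<lambda>g. - x g"]) (use x in \<open>auto simp: ga_carrier ga_add ga_zero fsupp_def\<close>)
  next
    show "\<zero>\<^bsub>grp_alg G\<^esub> \<in> carrier (grp_alg G :: ('g \<Rightarrow> 'k::field) ring)"
      by (rule ga_memI[of "{}"]) (auto simp: ga_zero)
  qed (auto simp: ga_add ga_zero add.assoc add.commute ga_add_closed[unfolded ga_add])
  show "monoid (grp_alg G :: ('g \<Rightarrow> 'k::field) ring)"
  proof (rule monoidI)
    fix x assume x: "x \<in> carrier (grp_alg G :: ('g \<Rightarrow> 'k::field) ring)"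
    show "\<one>\<^bsub>grp_alg G\<^esub> \<otimes>\<^bsub>grp_alg G\<^esub> x = x"
      by (rule ga_eqI) (use x in \<open>auto simp: ga_one ga_mult_closed grp_elt_closed grp_elt_mult_apply\<close>)
    show "x \<otimes>\<^bsub>grp_alg G\<^esub> \<one>\<^bsub>grp_alg G\<^esub> = x"
      by (rule ga_eqI) (use x in \<open>auto simp: ga_one ga_mult_closed grp_elt_closed mult_grp_elt_apply\<close>)
  qed (auto simp: ga_mult_closed ga_mult_assoc ga_one grp_elt_closed)
qed (simp_all add: ga_l_distr ga_r_distr)


section \<open>The involution and symmetrisation\<close>

lemma ga_neg:
  assumes a: "a \<in> carrier (grp_alg G :: ('g \<Rightarrow> 'k::field) ring)"
  shows "\<ominus>\<^bsub>grp_alg G\<^esub> a = (\<lambda>g. - a g)"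
proof -
  interpret R: ring "grp_alg G :: ('g \<Rightarrow> 'k::field) ring" by (rule ring_grp_alg)
  have c: "(\<lambda>g. - a g) \<in> carrier (grp_alg G :: ('g \<Rightarrow> 'k::field) ring)"
    using a by (auto simp: ga_carrier fsupp_def)
  show ?thesis
    by (rule R.minus_equality[OF _ a c]) (simp add: ga_add ga_zero)
qed

lemma ga_minus:
  assumes a: "a \<in> carrier (grp_alg G :: ('g \<Rightarrow> 'k::field) ring)"
    and b: "b \<in> carrier (grp_alg G :: ('g \<Rightarrow> 'k::field) ring)"
  shows "a \<ominus>\<^bsub>grp_alg G\<^esub> b = (\<lambda>g. a g - b g)"
  by (simp add: a_minus_def ga_neg[OF b] ga_add)

lemma fsupp_grp_star: "fsupp (grp_star G a) \<subseteq> (\<lambda>x. inv x) ` fsupp a"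
proof
  fix x assume "x \<in> fsupp (grp_star G a)"
  hence x: "x \<in> carrier G" "a (inv x) \<noteq> 0" by (auto simp: fsupp_def grp_star_apply split: if_splits)
  hence "inv x \<in> fsupp a" by (simp add: fsupp_def)
  moreover have "x = inv (inv x)" using x by simp
  ultimately show "x \<in> (\<lambda>x. inv x) ` fsupp a" by blast
qed

lemma grp_star_closed:
  assumes a: "a \<in> carrier (grp_alg G :: ('g \<Rightarrow> 'k::field) ring)"
  shows "grp_star G a \<in> carrier (grp_alg G)"
proof (rule ga_memI[of "(\<lambda>x. inv x) ` fsupp a"])
  show "finite ((\<lambda>x. inv x) ` fsupp a)" "(\<lambda>x. inv x) ` fsupp a \<subseteq> carrier G"
    using a by (auto simp: ga_carrier)
qed (use fsupp_grp_star in \<open>auto simp: fsupp_def\<close>)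

lemma ga_scale_closed:
  assumes a: "a \<in> carrier (grp_alg G :: ('g \<Rightarrow> 'k::field) ring)"
  shows "ga_scale c a \<in> carrier (grp_alg G)"
  by (rule ga_memI[of "fsupp a"]) (use a in \<open>auto simp: ga_carrier ga_scale_apply fsupp_def\<close>)

lemma grp_star_add:
  assumes a: "a \<in> carrier (grp_alg G :: ('g \<Rightarrow> 'k::field) ring)"
    and b: "b \<in> carrier (grp_alg G :: ('g \<Rightarrow> 'k::field) ring)"
  shows "grp_star G (a \<oplus>\<^bsub>grp_alg G\<^esub> b) = grp_star G a \<oplus>\<^bsub>grp_alg G\<^esub> grp_star G b"
  by (rule ext) (simp add: grp_star_apply ga_add)

lemma grp_star_neg:
  assumes a: "a \<in> carrier (grp_alg G :: ('g \<Rightarrow> 'k::field) ring)"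
  shows "grp_star G (\<ominus>\<^bsub>grp_alg G\<^esub> a) = \<ominus>\<^bsub>grp_alg G\<^esub> grp_star G a"
  by (rule ext) (simp add: grp_star_apply ga_neg a grp_star_closed)

lemma grp_star_minus:
  assumes a: "a \<in> carrier (grp_alg G :: ('g \<Rightarrow> 'k::field) ring)"
    and b: "b \<in> carrier (grp_alg G :: ('g \<Rightarrow> 'k::field) ring)"
  shows "grp_star G (a \<ominus>\<^bsub>grp_alg G\<^esub> b) = grp_star G a \<ominus>\<^bsub>grp_alg G\<^esub> grp_star G b"
  by (rule ext) (simp add: grp_star_apply ga_minus a b grp_star_closed)

lemma grp_star_involution:
  assumes a: "a \<in> carrier (grp_alg G :: ('g \<Rightarrow> 'k::field) ring)"
  shows "grp_star G (grp_star G a) = a"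
  by (rule ext) (use a in \<open>auto simp: grp_star_apply ga_out\<close>)

lemma grp_star_grp_elt: "g \<in> carrier G \<Longrightarrow> grp_star G (grp_elt g :: 'g \<Rightarrow> 'k::field) = grp_elt (inv g)"
  by (rule ext) (auto simp: grp_star_apply grp_elt_def)

lemma grp_star_mult:
  assumes a: "a \<in> carrier (grp_alg G :: ('g \<Rightarrow> 'k::field) ring)"
    and b: "b \<in> carrier (grp_alg G :: ('g \<Rightarrow> 'k::field) ring)"
  shows "grp_star G (a \<otimes>\<^bsub>grp_alg G\<^esub> b) = grp_star G b \<otimes>\<^bsub>grp_alg G\<^esub> grp_star G a"
proof (rule ga_eqI[where G=G])
  show "grp_star G (a \<otimes>\<^bsub>grp_alg G\<^esub> b) \<in> carrier (grp_alg G)"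
    by (rule grp_star_closed) (simp add: ga_mult_closed a b)
  show "grp_star G b \<otimes>\<^bsub>grp_alg G\<^esub> grp_star G a \<in> carrier (grp_alg G)"
    by (simp add: ga_mult_closed a b grp_star_closed)
  fix g assume g: "g \<in> carrier G"
  have fa: "finite (fsupp a)" "fsupp a \<subseteq> carrier G" using a by (auto simp: ga_carrier)
  have "grp_star G (a \<otimes>\<^bsub>grp_alg G\<^esub> b) g = (\<Sum>h\<in>fsupp a. a h * b (inv h \<otimes> inv g))"
    using g by (simp add: grp_star_apply ga_mult_apply[OF a _ fa(1)])
  also have "\<dots> = (\<Sum>h\<in>fsupp a. b (inv (g \<otimes> h)) * a h)"
    by (rule sum.cong[OF refl]) (use g fa in \<open>auto simp: inv_mult_group mult.commute\<close>)
  also have "\<dots> = (\<Sum>k\<in>(\<lambda>x. inv x) ` fsupp a. b (inv (g \<otimes> inv k)) * a (inv k))"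
  proof -
    have "inj_on (\<lambda>x. inv x) (fsupp a)" using fa by (auto simp: inj_on_def)
    hence "(\<Sum>k\<in>(\<lambda>x. inv x) ` fsupp a. b (inv (g \<otimes> inv k)) * a (inv k)) = (\<Sum>h\<in>fsupp a. b (inv (g \<otimes> inv (inv h))) * a (inv (inv h)))"
      by (simp add: sum.reindex)
    also have "\<dots> = (\<Sum>h\<in>fsupp a. b (inv (g \<otimes> h)) * a h)"
      by (rule sum.cong[OF refl]) (use fa in auto)
    finally show ?thesis by simp
  qed
  also have "\<dots> = (grp_star G b \<otimes>\<^bsub>grp_alg G\<^esub> grp_star G a) g"
  proof -
    have T: "finite ((\<lambda>x. inv x) ` fsupp a)" "(\<lambda>x. inv x) ` fsupp a \<subseteq> carrier G" using fa by auto
    have "(grp_star G b \<otimes>\<^bsub>grp_alg G\<^esub> grp_star G a) g = (\<Sum>k\<in>(\<lambda>x. inv x) ` fsupp a. grp_star G b (g \<otimes> inv k) * grp_star G a k)"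
      by (rule ga_mult_apply_right[OF grp_star_closed[OF b] grp_star_closed[OF a] g T(1) fsupp_grp_star T(2)])
    also have "\<dots> = (\<Sum>k\<in>(\<lambda>x. inv x) ` fsupp a. b (inv (g \<otimes> inv k)) * a (inv k))"
      by (rule sum.cong[OF refl]) (use g fa in \<open>auto simp: grp_star_apply\<close>)
    finally show ?thesis by simp
  qed
  finally show "grp_star G (a \<otimes>\<^bsub>grp_alg G\<^esub> b) g = (grp_star G b \<otimes>\<^bsub>grp_alg G\<^esub> grp_star G a) g" .
qed

lemma ideal_comm_ideal: "ideal (comm_ideal G :: ('g \<Rightarrow> 'k::field) set) (grp_alg G)"
proof -
  interpret R: ring "grp_alg G :: ('g \<Rightarrow> 'k::field) ring" by (rule ring_grp_alg)
  show ?thesis unfolding comm_ideal_def by (rule R.genideal_ideal) auto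
qed

lemma commutator_in_comm_ideal:
  assumes a: "a \<in> carrier (grp_alg G :: ('g \<Rightarrow> 'k::field) ring)"
    and b: "b \<in> carrier (grp_alg G :: ('g \<Rightarrow> 'k::field) ring)" and bs: "grp_star G b = b"
  shows "a \<otimes>\<^bsub>grp_alg G\<^esub> b \<ominus>\<^bsub>grp_alg G\<^esub> b \<otimes>\<^bsub>grp_alg G\<^esub> a \<in> comm_ideal G"
proof -
  interpret R: ring "grp_alg G :: ('g \<Rightarrow> 'k::field) ring" by (rule ring_grp_alg)
  show ?thesis unfolding comm_ideal_def
    by (rule R.genideal_self[THEN subsetD]) (use a b bs in auto)
qed

text \<open>Scalar multiplication is multiplication by a scalar multiple of the unit, so I_G is
  closed under it.\<close>

lemma ga_scale_eq_mult:
  assumes a: "a \<in> carrier (grp_alg G :: ('g \<Rightarrow> 'k::field) ring)"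
  shows "ga_scale c a = ga_scale c \<one>\<^bsub>grp_alg G\<^esub> \<otimes>\<^bsub>grp_alg G\<^esub> a"
proof (rule ga_eqI[where G=G])
  show "ga_scale c a \<in> carrier (grp_alg G)" by (rule ga_scale_closed[OF a])
  have o: "ga_scale c \<one>\<^bsub>grp_alg G\<^esub> \<in> carrier (grp_alg G :: ('g \<Rightarrow> 'k::field) ring)"
    by (rule ga_scale_closed) (simp add: ga_one grp_elt_closed)
  thus "ga_scale c \<one>\<^bsub>grp_alg G\<^esub> \<otimes>\<^bsub>grp_alg G\<^esub> a \<in> carrier (grp_alg G)" by (simp add: ga_mult_closed a)
  fix g assume g: "g \<in> carrier G"
  show "ga_scale c a g = (ga_scale c \<one>\<^bsub>grp_alg G\<^esub> \<otimes>\<^bsub>grp_alg G\<^esub> a) g"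
    by (subst ga_mult_apply[OF o g, of "{\<one>}"]) (auto simp: ga_scale_apply ga_one grp_elt_def fsupp_def g)
qed

lemma comm_ideal_scale:
  assumes i: "i \<in> (comm_ideal G :: ('g \<Rightarrow> 'k::field) set)"
  shows "ga_scale c i \<in> comm_ideal G"
proof -
  interpret I: ideal "comm_ideal G :: ('g \<Rightarrow> 'k::field) set" "grp_alg G" by (rule ideal_comm_ideal)
  have o: "ga_scale c \<one>\<^bsub>grp_alg G\<^esub> \<in> carrier (grp_alg G :: ('g \<Rightarrow> 'k::field) ring)"
    by (rule ga_scale_closed) (simp add: ga_one grp_elt_closed)
  show ?thesis using ga_scale_eq_mult[OF I.Icarr[OF i]] I.I_l_closed[OF i o] by simp
qed

lemma grp_star_commutator:
  assumes a: "a \<in> carrier (grp_alg G :: ('g \<Rightarrow> 'k::field) ring)"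
    and b: "b \<in> carrier (grp_alg G)" and bs: "grp_star G b = b"
  shows "grp_star G (a \<otimes>\<^bsub>grp_alg G\<^esub> b \<ominus>\<^bsub>grp_alg G\<^esub> b \<otimes>\<^bsub>grp_alg G\<^esub> a)
       = \<ominus>\<^bsub>grp_alg G\<^esub> (grp_star G a \<otimes>\<^bsub>grp_alg G\<^esub> b \<ominus>\<^bsub>grp_alg G\<^esub> b \<otimes>\<^bsub>grp_alg G\<^esub> grp_star G a)"
proof -
  interpret R: ring "grp_alg G :: ('g \<Rightarrow> 'k) ring" by (rule ring_grp_alg)
  have sa: "grp_star G a \<in> carrier (grp_alg G)" by (rule grp_star_closed[OF a])
  have "grp_star G (a \<otimes>\<^bsub>grp_alg G\<^esub> b \<ominus>\<^bsub>grp_alg G\<^esub> b \<otimes>\<^bsub>grp_alg G\<^esub> a)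
      = b \<otimes>\<^bsub>grp_alg G\<^esub> grp_star G a \<ominus>\<^bsub>grp_alg G\<^esub> grp_star G a \<otimes>\<^bsub>grp_alg G\<^esub> b"
    using a b bs by (simp add: grp_star_minus grp_star_mult)
  also have "\<dots> = \<ominus>\<^bsub>grp_alg G\<^esub> (grp_star G a \<otimes>\<^bsub>grp_alg G\<^esub> b \<ominus>\<^bsub>grp_alg G\<^esub> b \<otimes>\<^bsub>grp_alg G\<^esub> grp_star G a)"
    using sa b by algebra
  finally show ?thesis .
qed

text \<open>Hence I_G is *-stable: the elements whose image under * lies in I_G form an ideal
  containing the generators.\<close>

lemma comm_ideal_grp_star:
  assumes i: "i \<in> (comm_ideal G :: ('g \<Rightarrow> 'k::field) set)"
  shows "grp_star G i \<in> comm_ideal G"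
proof -
  interpret R: ring "grp_alg G :: ('g \<Rightarrow> 'k::field) ring" by (rule ring_grp_alg)
  interpret I: ideal "comm_ideal G :: ('g \<Rightarrow> 'k::field) set" "grp_alg G" by (rule ideal_comm_ideal)
  let ?Q = "{x \<in> carrier (grp_alg G :: ('g \<Rightarrow> 'k::field) ring). grp_star G x \<in> comm_ideal G}"
  have "ideal ?Q (grp_alg G)"
  proof (rule R.idealI_closed)
    have "grp_star G (\<zero>\<^bsub>grp_alg G\<^esub>) = (\<zero>\<^bsub>grp_alg G\<^esub> :: 'g \<Rightarrow> 'k)" by (rule ext) (simp add: grp_star_apply ga_zero)
    thus "\<zero>\<^bsub>grp_alg G\<^esub> \<in> ?Q" by (simp add: I.I_zero_closed)
  next
    fix a b :: "'g \<Rightarrow> 'k" assume "a \<in> ?Q" "b \<in> ?Q"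
    thus "a \<oplus>\<^bsub>grp_alg G\<^esub> b \<in> ?Q" by (simp add: grp_star_add I.I_add_closed)
  next
    fix a :: "'g \<Rightarrow> 'k" assume "a \<in> ?Q"
    thus "\<ominus>\<^bsub>grp_alg G\<^esub> a \<in> ?Q" by (simp add: grp_star_neg I.I_neg_closed)
  next
    fix a x :: "'g \<Rightarrow> 'k" assume "a \<in> ?Q" "x \<in> carrier (grp_alg G)"
    thus "x \<otimes>\<^bsub>grp_alg G\<^esub> a \<in> ?Q" "a \<otimes>\<^bsub>grp_alg G\<^esub> x \<in> ?Q"
      by (simp_all add: grp_star_mult I.I_l_closed I.I_r_closed grp_star_closed)
  qed auto
  moreover have "{(a \<otimes>\<^bsub>grp_alg G\<^esub> b) \<ominus>\<^bsub>grp_alg G\<^esub> (b \<otimes>\<^bsub>grp_alg G\<^esub> a) | a b.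
        a \<in> carrier (grp_alg G) \<and> b \<in> carrier (grp_alg G) \<and> grp_star G b = b} \<subseteq> ?Q"
    by (auto simp: grp_star_commutator intro!: I.I_neg_closed commutator_in_comm_ideal grp_star_closed)
  ultimately have "comm_ideal G \<subseteq> ?Q" unfolding comm_ideal_def by (rule R.genideal_minimal)
  thus ?thesis using i by blast
qed

lemma sym_part_apply: "sym_part G x g = (x g + grp_star G x g) / 2"
  by (simp add: sym_part_def ga_scale_apply ga_add)

lemma sym_part_closed:
  assumes x: "x \<in> carrier (grp_alg G :: ('g \<Rightarrow> 'k::field_char_0) ring)"
  shows "sym_part G x \<in> carrier (grp_alg G)"
  unfolding sym_part_def by (intro ga_scale_closed ga_add_closed grp_star_closed x)

lemma grp_star_sym_part:
  assumes x: "x \<in> carrier (grp_alg G :: ('g \<Rightarrow> 'k::field_char_0) ring)"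
  shows "grp_star G (sym_part G x) = sym_part G x"
  by (rule ext) (use x in \<open>auto simp: sym_part_apply grp_star_apply ga_out\<close>)

lemma sym_part_fixed:
  assumes x: "x \<in> carrier (grp_alg G :: ('g \<Rightarrow> 'k::field_char_0) ring)" and s: "grp_star G x = x"
  shows "sym_part G x = x"
  by (rule ext) (simp add: sym_part_apply s)

lemma sym_part_add:
  assumes x: "x \<in> carrier (grp_alg G :: ('g \<Rightarrow> 'k::field_char_0) ring)"
    and y: "y \<in> carrier (grp_alg G :: ('g \<Rightarrow> 'k::field_char_0) ring)"
  shows "sym_part G (x \<oplus>\<^bsub>grp_alg G\<^esub> y) = sym_part G x \<oplus>\<^bsub>grp_alg G\<^esub> sym_part G y"
  by (rule ext) (simp add: sym_part_apply grp_star_apply ga_add add_divide_distrib)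

lemma sym_part_neg:
  assumes x: "x \<in> carrier (grp_alg G :: ('g \<Rightarrow> 'k::field_char_0) ring)"
  shows "sym_part G (\<ominus>\<^bsub>grp_alg G\<^esub> x) = \<ominus>\<^bsub>grp_alg G\<^esub> sym_part G x"
  by (rule ext) (simp add: sym_part_apply grp_star_apply ga_neg x sym_part_closed field_simps)

lemma sym_part_minus:
  assumes x: "x \<in> carrier (grp_alg G :: ('g \<Rightarrow> 'k::field_char_0) ring)"
    and y: "y \<in> carrier (grp_alg G :: ('g \<Rightarrow> 'k::field_char_0) ring)"
  shows "sym_part G (x \<ominus>\<^bsub>grp_alg G\<^esub> y) = sym_part G x \<ominus>\<^bsub>grp_alg G\<^esub> sym_part G y"
  by (rule ext) (simp add: sym_part_apply grp_star_apply ga_minus x y sym_part_closed field_simps)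

lemma comm_ideal_sym_part:
  assumes i: "i \<in> (comm_ideal G :: ('g \<Rightarrow> 'k::field_char_0) set)"
  shows "sym_part G i \<in> comm_ideal G"
proof -
  interpret I: ideal "comm_ideal G :: ('g \<Rightarrow> 'k::field_char_0) set" "grp_alg G" by (rule ideal_comm_ideal)
  show ?thesis unfolding sym_part_def
    by (rule comm_ideal_scale, rule I.I_add_closed[OF i comm_ideal_grp_star[OF i]])
qed

lemma sym_part_minus_self:
  assumes x: "x \<in> carrier (grp_alg G :: ('g \<Rightarrow> 'k::field_char_0) ring)"
    and s: "grp_star G x \<ominus>\<^bsub>grp_alg G\<^esub> x \<in> comm_ideal G"
  shows "sym_part G x \<ominus>\<^bsub>grp_alg G\<^esub> x \<in> comm_ideal G"
proof -
  have sx: "grp_star G x \<in> carrier (grp_alg G)" by (rule grp_star_closed[OF x])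
  have "sym_part G x \<ominus>\<^bsub>grp_alg G\<^esub> x = ga_scale (1/2) (grp_star G x \<ominus>\<^bsub>grp_alg G\<^esub> x)"
    by (rule ext) (simp add: ga_minus x sx sym_part_closed sym_part_apply ga_scale_apply field_simps)
  thus ?thesis using comm_ideal_scale[OF s] by simp
qed

text \<open>bar(xy) \<equiv> bar(yx) modulo I_G, by the commutator identity proved at the start.\<close>

lemma sym_part_commute:
  assumes x: "x \<in> carrier (grp_alg G :: ('g \<Rightarrow> 'k::field_char_0) ring)"
    and y: "y \<in> carrier (grp_alg G :: ('g \<Rightarrow> 'k::field_char_0) ring)"
  shows "sym_part G (x \<otimes>\<^bsub>grp_alg G\<^esub> y) \<ominus>\<^bsub>grp_alg G\<^esub> sym_part G (y \<otimes>\<^bsub>grp_alg G\<^esub> x) \<in> comm_ideal G"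
proof -
  interpret R: ring "grp_alg G :: ('g \<Rightarrow> 'k::field_char_0) ring" by (rule ring_grp_alg)
  interpret I: ideal "comm_ideal G :: ('g \<Rightarrow> 'k::field_char_0) set" "grp_alg G" by (rule ideal_comm_ideal)
  define x' where "x' = grp_star G x"
  define y' where "y' = grp_star G y"
  have x': "x' \<in> carrier (grp_alg G)" unfolding x'_def by (rule grp_star_closed[OF x])
  have y': "y' \<in> carrier (grp_alg G)" unfolding y'_def by (rule grp_star_closed[OF y])
  have sxx: "grp_star G (x \<oplus>\<^bsub>grp_alg G\<^esub> x') = x \<oplus>\<^bsub>grp_alg G\<^esub> x'"
    unfolding x'_def by (simp add: grp_star_add x grp_star_closed grp_star_involution R.a_comm)
  have syy: "grp_star G (y \<oplus>\<^bsub>grp_alg G\<^esub> y') = y \<oplus>\<^bsub>grp_alg G\<^esub> y'"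
    unfolding y'_def by (simp add: grp_star_add y grp_star_closed grp_star_involution R.a_comm)
  define d where "d = x \<otimes>\<^bsub>grp_alg G\<^esub> y \<oplus>\<^bsub>grp_alg G\<^esub> y' \<otimes>\<^bsub>grp_alg G\<^esub> x'
    \<ominus>\<^bsub>grp_alg G\<^esub> (y \<otimes>\<^bsub>grp_alg G\<^esub> x \<oplus>\<^bsub>grp_alg G\<^esub> x' \<otimes>\<^bsub>grp_alg G\<^esub> y')"
  have t: "d \<in> comm_ideal G"
    unfolding d_def R.commutator_trace_identity[OF x y x' y']
    by (intro I.I_add_closed I.I_minus_closed commutator_in_comm_ideal R.a_closed x y x' y' sxx syy)
  have "sym_part G (x \<otimes>\<^bsub>grp_alg G\<^esub> y) \<ominus>\<^bsub>grp_alg G\<^esub> sym_part G (y \<otimes>\<^bsub>grp_alg G\<^esub> x)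
     = ga_scale (1/2) d"
    unfolding d_def by (rule ext) (simp add: x'_def y'_def sym_part_apply grp_star_mult x y ga_minus
        sym_part_closed R.m_closed R.a_closed grp_star_closed ga_add_apply ga_scale_apply field_simps)
  thus ?thesis using comm_ideal_scale[OF t] by simp
qed

section \<open>The algebra A_G and the ring \<kappa>G^#\<close>

lemma A_carrier: "carrier (A_alg G) = {A_cls G x | x. x \<in> carrier (grp_alg G :: ('g \<Rightarrow> 'k::field_char_0) ring)}"
  unfolding A_alg_def A_cls_def by (rule ideal.quot_carrier[OF ideal_comm_ideal])

lemma A_cls_closed: "x \<in> carrier (grp_alg G :: ('g \<Rightarrow> 'k::field_char_0) ring) \<Longrightarrow> A_cls G x \<in> carrier (A_alg G)"
  using A_carrier by auto

lemma A_add: "x \<in> carrier (grp_alg G :: ('g \<Rightarrow> 'k::field_char_0) ring) \<Longrightarrow> y \<in> carrier (grp_alg G) \<Longrightarrow>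
  A_cls G x \<oplus>\<^bsub>A_alg G\<^esub> A_cls G y = A_cls G (x \<oplus>\<^bsub>grp_alg G\<^esub> y)"
  unfolding A_alg_def A_cls_def by (rule ideal.quot_add[OF ideal_comm_ideal])

lemma A_mult: "x \<in> carrier (grp_alg G :: ('g \<Rightarrow> 'k::field_char_0) ring) \<Longrightarrow> y \<in> carrier (grp_alg G) \<Longrightarrow>
  A_cls G x \<otimes>\<^bsub>A_alg G\<^esub> A_cls G y = A_cls G (x \<otimes>\<^bsub>grp_alg G\<^esub> y)"
  unfolding A_alg_def A_cls_def by (rule ideal.quot_mult[OF ideal_comm_ideal])

lemma A_neg: "x \<in> carrier (grp_alg G :: ('g \<Rightarrow> 'k::field_char_0) ring) \<Longrightarrow>
  \<ominus>\<^bsub>A_alg G\<^esub> A_cls G x = A_cls G (\<ominus>\<^bsub>grp_alg G\<^esub> x)"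
  unfolding A_alg_def A_cls_def by (rule ideal.quot_neg[OF ideal_comm_ideal])

lemma A_minus: "x \<in> carrier (grp_alg G :: ('g \<Rightarrow> 'k::field_char_0) ring) \<Longrightarrow> y \<in> carrier (grp_alg G) \<Longrightarrow>
  A_cls G x \<ominus>\<^bsub>A_alg G\<^esub> A_cls G y = A_cls G (x \<ominus>\<^bsub>grp_alg G\<^esub> y)"
  unfolding A_alg_def A_cls_def by (rule ideal.quot_minus[OF ideal_comm_ideal])

lemma A_zero: "\<zero>\<^bsub>A_alg G\<^esub> = (comm_ideal G :: ('g \<Rightarrow> 'k::field_char_0) set)"
  unfolding A_alg_def by (rule ideal.quot_zero[OF ideal_comm_ideal])

lemma A_one: "\<one>\<^bsub>A_alg G\<^esub> = A_cls G (\<one>\<^bsub>grp_alg G :: ('g \<Rightarrow> 'k::field_char_0) ring\<^esub>)"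
  unfolding A_alg_def A_cls_def by (rule ideal.quot_one[OF ideal_comm_ideal])

lemma A_eq: "x \<in> carrier (grp_alg G :: ('g \<Rightarrow> 'k::field_char_0) ring) \<Longrightarrow> y \<in> carrier (grp_alg G) \<Longrightarrow>
  (A_cls G x = A_cls G y) = (x \<ominus>\<^bsub>grp_alg G\<^esub> y \<in> comm_ideal G)"
  unfolding A_cls_def by (rule ideal.quot_eq_iff[OF ideal_comm_ideal])

lemma A_zero_iff: "x \<in> carrier (grp_alg G :: ('g \<Rightarrow> 'k::field_char_0) ring) \<Longrightarrow>
  (A_cls G x = comm_ideal G) = (x \<in> comm_ideal G)"
  unfolding A_cls_def by (rule ideal.quot_zero_iff[OF ideal_comm_ideal])

lemma A_cls_zero: "A_cls G \<zero>\<^bsub>grp_alg G\<^esub> = (\<zero>\<^bsub>A_alg G\<^esub> :: ('g \<Rightarrow> 'k::field_char_0) set)"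
proof -
  interpret I: ideal "comm_ideal G :: ('g \<Rightarrow> 'k) set" "grp_alg G" by (rule ideal_comm_ideal)
  show ?thesis using A_zero_iff[OF I.zero_closed] by (simp add: A_zero I.I_zero_closed)
qed

lemma A_some_rep: "U \<in> carrier (A_alg G :: ('g \<Rightarrow> 'k::field_char_0) set ring) \<Longrightarrow>
   (SOME x. x \<in> U) \<in> carrier (grp_alg G :: ('g \<Rightarrow> 'k::field_char_0) ring) \<and> A_cls G (SOME x. x \<in> U) = U"
  unfolding A_alg_def A_cls_def using ideal.quot_some_rep[OF ideal_comm_ideal] by blast

lemma ring_A_alg: "ring (A_alg G :: ('g \<Rightarrow> 'k::field_char_0) set ring)"
  unfolding A_alg_def by (rule ideal.quotient_is_ring[OF ideal_comm_ideal])

text \<open>The involution and the bar-operation of A_G are well defined on classes, because * and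
  bar preserve I_G.\<close>

lemma A_star_cls:
  assumes x: "x \<in> carrier (grp_alg G :: ('g \<Rightarrow> 'k::field_char_0) ring)"
  shows "A_star G (A_cls G x) = A_cls G (grp_star G x)"
proof -
  let ?r = "SOME y. y \<in> A_cls G x"
  have r: "?r \<in> carrier (grp_alg G :: ('g \<Rightarrow> 'k::field_char_0) ring)" "A_cls G ?r = A_cls G x"
    using A_some_rep[OF A_cls_closed[OF x]] by auto
  have "?r \<ominus>\<^bsub>grp_alg G\<^esub> x \<in> comm_ideal G" using r A_eq[OF r(1) x] by simp
  hence "grp_star G (?r \<ominus>\<^bsub>grp_alg G\<^esub> x) \<in> comm_ideal G" by (rule comm_ideal_grp_star)
  hence "grp_star G ?r \<ominus>\<^bsub>grp_alg G\<^esub> grp_star G x \<in> comm_ideal G" by (simp add: grp_star_minus r x)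
  hence "A_cls G (grp_star G ?r) = A_cls G (grp_star G x)"
    using A_eq grp_star_closed r x by blast
  thus ?thesis unfolding A_star_def by simp
qed

lemma A_bar_cls:
  assumes x: "x \<in> carrier (grp_alg G :: ('g \<Rightarrow> 'k::field_char_0) ring)"
  shows "A_bar G (A_cls G x) = A_cls G (sym_part G x)"
proof -
  let ?r = "SOME y. y \<in> A_cls G x"
  have r: "?r \<in> carrier (grp_alg G :: ('g \<Rightarrow> 'k::field_char_0) ring)" "A_cls G ?r = A_cls G x"
    using A_some_rep[OF A_cls_closed[OF x]] by auto
  have "?r \<ominus>\<^bsub>grp_alg G\<^esub> x \<in> comm_ideal G" using r A_eq[OF r(1) x] by simp
  hence "sym_part G (?r \<ominus>\<^bsub>grp_alg G\<^esub> x) \<in> comm_ideal G" by (rule comm_ideal_sym_part)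
  hence "sym_part G ?r \<ominus>\<^bsub>grp_alg G\<^esub> sym_part G x \<in> comm_ideal G" by (simp add: sym_part_minus r x)
  hence "A_cls G (sym_part G ?r) = A_cls G (sym_part G x)"
    using A_eq sym_part_closed r x by blast
  moreover have "(\<lambda>g. (?r g + grp_star G ?r g) / 2) = sym_part G ?r"
    by (rule ext) (simp add: sym_part_apply)
  ultimately show ?thesis unfolding A_bar_def Let_def by simp
qed

lemma sharp_clsI:
  assumes x: "x \<in> carrier (grp_alg G :: ('g \<Rightarrow> 'k::field_char_0) ring)"
    and s: "grp_star G x \<ominus>\<^bsub>grp_alg G\<^esub> x \<in> comm_ideal G"
  shows "A_cls G x \<in> sharp G"
  unfolding sharp_def using A_cls_closed[OF x] A_star_cls[OF x] A_eq[OF grp_star_closed[OF x] x] s by simp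

lemma sharp_cls_symI:
  assumes x: "x \<in> carrier (grp_alg G :: ('g \<Rightarrow> 'k::field_char_0) ring)"
    and s: "grp_star G x = x"
  shows "A_cls G x \<in> sharp G"
proof -
  interpret I: ideal "comm_ideal G :: ('g \<Rightarrow> 'k::field_char_0) set" "grp_alg G" by (rule ideal_comm_ideal)
  show ?thesis by (rule sharp_clsI[OF x]) (simp add: s a_minus_def I.r_neg x)
qed

lemma sharp_symmetric_rep:
  assumes U: "U \<in> (sharp G :: ('g \<Rightarrow> 'k::field_char_0) set set)"
  shows "\<exists>x\<in>carrier (grp_alg G :: ('g \<Rightarrow> 'k::field_char_0) ring). U = A_cls G x \<and> grp_star G x = x"
proof -
  let ?r = "SOME y. y \<in> U"
  have Uc: "U \<in> carrier (A_alg G)" "A_star G U = U" using U by (auto simp: sharp_def)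
  have r: "?r \<in> carrier (grp_alg G :: ('g \<Rightarrow> 'k::field_char_0) ring)" "A_cls G ?r = U"
    using A_some_rep[OF Uc(1)] by auto
  have "A_cls G (grp_star G ?r) = A_cls G ?r" using Uc(2) A_star_cls[OF r(1)] r(2) by simp
  hence "grp_star G ?r \<ominus>\<^bsub>grp_alg G\<^esub> ?r \<in> comm_ideal G" using A_eq[OF grp_star_closed[OF r(1)] r(1)] by simp
  hence "sym_part G ?r \<ominus>\<^bsub>grp_alg G\<^esub> ?r \<in> comm_ideal G" by (rule sym_part_minus_self[OF r(1)])
  hence "A_cls G (sym_part G ?r) = U" using A_eq[OF sym_part_closed[OF r(1)] r(1)] r(2) by simp
  thus ?thesis using sym_part_closed[OF r(1)] grp_star_sym_part[OF r(1)] by metis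
qed

lemma sharp_sub: "(sharp G :: ('g \<Rightarrow> 'k::field_char_0) set set) \<subseteq> carrier (A_alg G)"
  by (auto simp: sharp_def)

lemma sharp_mult:
  assumes U: "U \<in> (sharp G :: ('g \<Rightarrow> 'k::field_char_0) set set)" and V: "V \<in> sharp G"
  shows "U \<otimes>\<^bsub>A_alg G\<^esub> V \<in> sharp G"
proof -
  interpret R: ring "grp_alg G :: ('g \<Rightarrow> 'k::field_char_0) ring" by (rule ring_grp_alg)
  interpret I: ideal "comm_ideal G :: ('g \<Rightarrow> 'k::field_char_0) set" "grp_alg G" by (rule ideal_comm_ideal)
  obtain x where x: "x \<in> carrier (grp_alg G)" "U = A_cls G x" "grp_star G x = x" using sharp_symmetric_rep[OF U] by blast
  obtain y where y: "y \<in> carrier (grp_alg G)" "V = A_cls G y" "grp_star G y = y" using sharp_symmetric_rep[OF V] by blast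
  have "grp_star G (x \<otimes>\<^bsub>grp_alg G\<^esub> y) \<ominus>\<^bsub>grp_alg G\<^esub> x \<otimes>\<^bsub>grp_alg G\<^esub> y \<in> comm_ideal G"
  proof -
    have "y \<otimes>\<^bsub>grp_alg G\<^esub> x \<ominus>\<^bsub>grp_alg G\<^esub> x \<otimes>\<^bsub>grp_alg G\<^esub> y \<in> comm_ideal G"
      by (rule commutator_in_comm_ideal[OF y(1) x(1) x(3)])
    thus ?thesis by (simp add: grp_star_mult x y)
  qed
  hence "A_cls G (x \<otimes>\<^bsub>grp_alg G\<^esub> y) \<in> sharp G" by (rule sharp_clsI[OF R.m_closed[OF x(1) y(1)]])
  thus ?thesis by (simp add: x y A_mult)
qed

lemma sharp_add:
  assumes U: "U \<in> (sharp G :: ('g \<Rightarrow> 'k::field_char_0) set set)" and V: "V \<in> sharp G"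
  shows "U \<oplus>\<^bsub>A_alg G\<^esub> V \<in> sharp G"
proof -
  interpret R: ring "grp_alg G :: ('g \<Rightarrow> 'k::field_char_0) ring" by (rule ring_grp_alg)
  obtain x where x: "x \<in> carrier (grp_alg G)" "U = A_cls G x" "grp_star G x = x" using sharp_symmetric_rep[OF U] by blast
  obtain y where y: "y \<in> carrier (grp_alg G)" "V = A_cls G y" "grp_star G y = y" using sharp_symmetric_rep[OF V] by blast
  have "A_cls G (x \<oplus>\<^bsub>grp_alg G\<^esub> y) \<in> sharp G"
    by (rule sharp_cls_symI[OF R.a_closed[OF x(1) y(1)]]) (simp add: grp_star_add x y)
  thus ?thesis by (simp add: x y A_add)
qed

lemma sharp_neg:
  assumes U: "U \<in> (sharp G :: ('g \<Rightarrow> 'k::field_char_0) set set)"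
  shows "\<ominus>\<^bsub>A_alg G\<^esub> U \<in> sharp G"
proof -
  interpret R: ring "grp_alg G :: ('g \<Rightarrow> 'k::field_char_0) ring" by (rule ring_grp_alg)
  obtain x where x: "x \<in> carrier (grp_alg G)" "U = A_cls G x" "grp_star G x = x" using sharp_symmetric_rep[OF U] by blast
  have "A_cls G (\<ominus>\<^bsub>grp_alg G\<^esub> x) \<in> sharp G"
    by (rule sharp_cls_symI[OF R.a_inv_closed[OF x(1)]]) (simp add: grp_star_neg x)
  thus ?thesis by (simp add: x A_neg)
qed

lemma sharp_one: "\<one>\<^bsub>A_alg G\<^esub> \<in> (sharp G :: ('g \<Rightarrow> 'k::field_char_0) set set)"
proof -
  interpret R: ring "grp_alg G :: ('g \<Rightarrow> 'k::field_char_0) ring" by (rule ring_grp_alg)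
  show ?thesis unfolding A_one
    by (rule sharp_cls_symI[OF R.one_closed]) (simp add: ga_one grp_star_grp_elt)
qed

lemma subring_sharp: "subring (sharp G :: ('g \<Rightarrow> 'k::field_char_0) set set) (A_alg G)"
proof -
  interpret A: ring "A_alg G :: ('g \<Rightarrow> 'k::field_char_0) set ring" by (rule ring_A_alg)
  show ?thesis
    by (rule A.subringI) (auto simp: sharp_sub sharp_one sharp_mult sharp_add sharp_neg)
qed

lemma ring_sharp: "ring (sharp_ring G :: ('g \<Rightarrow> 'k::field_char_0) set ring)"
proof -
  interpret A: ring "A_alg G :: ('g \<Rightarrow> 'k::field_char_0) set ring" by (rule ring_A_alg)
  show ?thesis unfolding sharp_ring_def by (rule A.subring_is_ring[OF subring_sharp])
qed

lemma sharp_ring_neg: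
  assumes U: "U \<in> (sharp G :: ('g \<Rightarrow> 'k::field_char_0) set set)"
  shows "\<ominus>\<^bsub>sharp_ring G\<^esub> U = \<ominus>\<^bsub>A_alg G\<^esub> U"
proof -
  interpret A: ring "A_alg G :: ('g \<Rightarrow> 'k::field_char_0) set ring" by (rule ring_A_alg)
  interpret S: ring "sharp_ring G :: ('g \<Rightarrow> 'k::field_char_0) set ring" by (rule ring_sharp)
  have Uc: "U \<in> carrier (A_alg G)" using U sharp_sub by blast
  have "\<ominus>\<^bsub>A_alg G\<^esub> U \<oplus>\<^bsub>A_alg G\<^esub> U = \<zero>\<^bsub>A_alg G\<^esub>" by (rule A.l_neg[OF Uc])
  thus ?thesis
    by (intro S.minus_equality) (simp_all add: sharp_ring_simps U sharp_neg)
qed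

lemma sharp_gen_cls:
  assumes x: "x \<in> carrier (grp_alg G :: ('g \<Rightarrow> 'k::field_char_0) ring)" and l: "l \<in> carrier G"
  shows "A_bar G (A_cls G x \<otimes>\<^bsub>A_alg G\<^esub> A_cls G (grp_elt l)) \<ominus>\<^bsub>A_alg G\<^esub> A_bar G (A_cls G x)
       = A_cls G (sym_part G (x \<otimes>\<^bsub>grp_alg G\<^esub> (grp_elt l \<ominus>\<^bsub>grp_alg G\<^esub> \<one>\<^bsub>grp_alg G\<^esub>)))"
proof -
  interpret R: ring "grp_alg G :: ('g \<Rightarrow> 'k) ring" by (rule ring_grp_alg)
  have el: "(grp_elt l :: 'g \<Rightarrow> 'k) \<in> carrier (grp_alg G)" by (rule grp_elt_closed[OF l])
  have xl: "x \<otimes>\<^bsub>grp_alg G\<^esub> grp_elt l \<in> carrier (grp_alg G)" using x el by simp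
  have "A_bar G (A_cls G x \<otimes>\<^bsub>A_alg G\<^esub> A_cls G (grp_elt l)) \<ominus>\<^bsub>A_alg G\<^esub> A_bar G (A_cls G x)
      = A_cls G (sym_part G (x \<otimes>\<^bsub>grp_alg G\<^esub> grp_elt l) \<ominus>\<^bsub>grp_alg G\<^esub> sym_part G x)"
    by (simp add: A_mult x el xl A_bar_cls A_minus sym_part_closed)
  also have "\<dots> = A_cls G (sym_part G (x \<otimes>\<^bsub>grp_alg G\<^esub> grp_elt l \<ominus>\<^bsub>grp_alg G\<^esub> x))"
    by (simp add: sym_part_minus xl x)
  also have "x \<otimes>\<^bsub>grp_alg G\<^esub> grp_elt l \<ominus>\<^bsub>grp_alg G\<^esub> x
      = x \<otimes>\<^bsub>grp_alg G\<^esub> (grp_elt l \<ominus>\<^bsub>grp_alg G\<^esub> \<one>\<^bsub>grp_alg G\<^esub>)"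
    using R.mult_minus_one[OF x el] by simp
  finally show ?thesis .
qed

end

definition sharp_gens :: "('g, 'm) monoid_scheme \<Rightarrow> 'g set \<Rightarrow> ('g \<Rightarrow> 'k::field) set set" where
  "sharp_gens G L = {A_bar G (U \<otimes>\<^bsub>A_alg G\<^esub> A_cls G (grp_elt l)) \<ominus>\<^bsub>A_alg G\<^esub> A_bar G U | U l.
     U \<in> carrier (A_alg G) \<and> l \<in> L}"

lemma sharp_ideal_genideal: "sharp_ideal G L = genideal (sharp_ring G) (sharp_gens G L)"
  by (simp add: sharp_ideal_def sharp_gens_def)

lemma sharp_gens_subset_sharp_ideal: "sharp_gens G L \<subseteq> sharp_ideal G L"
  by (auto simp: sharp_ideal_genideal genideal_def)

section \<open>The map \<kappa>G \<rightarrow> \<kappa>H induced by f, and the kernel of f^#\<close>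

context group_hom
begin

lemma alg_map_zero: "grp_alg_map h H (\<zero>\<^bsub>grp_alg G\<^esub> :: 'a \<Rightarrow> 'k::field) = \<zero>\<^bsub>grp_alg H\<^esub>"
  by (rule ext) (simp add: grp_alg_map_def ga_zero fsupp_def)

lemma alg_map_apply:
  assumes a: "a \<in> carrier (grp_alg G :: ('a \<Rightarrow> 'k::field) ring)" and y: "y \<in> carrier H"
    and S: "finite S" "fsupp a \<subseteq> S"
  shows "grp_alg_map h H a y = (\<Sum>g\<in>{g\<in>S. h g = y}. a g)"
  unfolding grp_alg_map_def using y S
  by (auto intro!: sum.mono_neutral_left simp: fsupp_def)

lemma alg_map_closed:
  assumes a: "a \<in> carrier (grp_alg G :: ('a \<Rightarrow> 'k::field) ring)"
  shows "grp_alg_map h H a \<in> carrier (grp_alg H)"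
proof (rule ga_memI[of "h ` fsupp a"])
  show "finite (h ` fsupp a)" "h ` fsupp a \<subseteq> carrier H" using a by (auto simp: ga_carrier)
  fix y assume "y \<notin> h ` fsupp a"
  hence e: "{g \<in> fsupp a. h g = y} = {}" by auto
  show "grp_alg_map h H a y = 0" unfolding grp_alg_map_def e by simp
qed

lemma alg_map_add:
  assumes a: "a \<in> carrier (grp_alg G :: ('a \<Rightarrow> 'k::field) ring)" and b: "b \<in> carrier (grp_alg G)"
  shows "grp_alg_map h H (a \<oplus>\<^bsub>grp_alg G\<^esub> b) = grp_alg_map h H a \<oplus>\<^bsub>grp_alg H\<^esub> grp_alg_map h H b"
proof (rule ga_eqI[where G=H])
  show "grp_alg_map h H (a \<oplus>\<^bsub>grp_alg G\<^esub> b) \<in> carrier (grp_alg H)"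
    by (rule alg_map_closed) (simp add: ga_add_closed[OF G.is_group] a b)
  show "grp_alg_map h H a \<oplus>\<^bsub>grp_alg H\<^esub> grp_alg_map h H b \<in> carrier (grp_alg H)"
    by (simp add: ga_add_closed[OF H.is_group] alg_map_closed a b)
  fix y assume y: "y \<in> carrier H"
  let ?S = "fsupp a \<union> fsupp b"
  have S: "finite ?S" using a b by (auto simp: ga_carrier)
  have ab: "a \<oplus>\<^bsub>grp_alg G\<^esub> b \<in> carrier (grp_alg G)" by (simp add: ga_add_closed[OF G.is_group] a b)
  have "fsupp (a \<oplus>\<^bsub>grp_alg G\<^esub> b) \<subseteq> ?S" by (auto simp: fsupp_def ga_add)
  thus "grp_alg_map h H (a \<oplus>\<^bsub>grp_alg G\<^esub> b) y = (grp_alg_map h H a \<oplus>\<^bsub>grp_alg H\<^esub> grp_alg_map h H b) y"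
    using S y by (simp add: ga_add_apply alg_map_apply[OF ab y S] alg_map_apply[OF a y S] alg_map_apply[OF b y S] sum.distrib)
qed

lemma alg_map_scale:
  assumes a: "a \<in> carrier (grp_alg G :: ('a \<Rightarrow> 'k::field) ring)"
  shows "grp_alg_map h H (ga_scale c a) = ga_scale c (grp_alg_map h H a)"
proof (rule ext)
  fix y
  have ca: "ga_scale c a \<in> carrier (grp_alg G)" by (rule ga_scale_closed[OF G.is_group a])
  have fa: "finite (fsupp a)" using a by (simp add: ga_carrier)
  have sub: "fsupp (ga_scale c a) \<subseteq> fsupp a" by (auto simp: fsupp_def ga_scale_apply)
  show "grp_alg_map h H (ga_scale c a) y = ga_scale c (grp_alg_map h H a) y"
  proof (cases "y \<in> carrier H")
    case True
    show ?thesis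
      by (simp only: alg_map_apply[OF ca True fa sub] alg_map_apply[OF a True fa order.refl]
          ga_scale_apply sum_distrib_left)
  qed (simp add: grp_alg_map_def ga_scale_apply)
qed

lemma alg_map_neg:
  assumes a: "a \<in> carrier (grp_alg G :: ('a \<Rightarrow> 'k::field) ring)"
  shows "grp_alg_map h H (\<ominus>\<^bsub>grp_alg G\<^esub> a) = \<ominus>\<^bsub>grp_alg H\<^esub> grp_alg_map h H a"
proof -
  have "\<ominus>\<^bsub>grp_alg G\<^esub> a = ga_scale (-1) a" by (rule ext) (simp add: ga_neg[OF G.is_group a] ga_scale_apply)
  moreover have "\<ominus>\<^bsub>grp_alg H\<^esub> grp_alg_map h H a = ga_scale (-1) (grp_alg_map h H a)"
    by (rule ext) (simp add: ga_neg[OF H.is_group alg_map_closed[OF a]] ga_scale_apply)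
  ultimately show ?thesis by (simp add: alg_map_scale a)
qed

lemma alg_map_minus:
  assumes a: "a \<in> carrier (grp_alg G :: ('a \<Rightarrow> 'k::field) ring)" and b: "b \<in> carrier (grp_alg G)"
  shows "grp_alg_map h H (a \<ominus>\<^bsub>grp_alg G\<^esub> b) = grp_alg_map h H a \<ominus>\<^bsub>grp_alg H\<^esub> grp_alg_map h H b"
proof -
  interpret R: ring "grp_alg G :: ('a \<Rightarrow> 'k::field) ring" by (rule ring_grp_alg[OF G.is_group])
  show ?thesis by (simp add: a_minus_def alg_map_add alg_map_neg a b)
qed

lemma alg_map_grp_elt:
  assumes g: "g \<in> carrier G"
  shows "grp_alg_map h H (grp_elt g :: 'a \<Rightarrow> 'k::field) = grp_elt (h g)"
proof (rule ext)
  fix y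
  have fibre: "{x \<in> {g}. h x = y} = (if h g = y then {g} else {})" by auto
  show "grp_alg_map h H (grp_elt g :: 'a \<Rightarrow> 'k::field) y = grp_elt (h g) y"
    unfolding grp_alg_map_def fsupp_grp_elt[OF G.is_group] fibre using g hom_closed[OF g]
    by (cases "h g = y") (simp_all add: grp_elt_def)
qed

lemma fsupp_alg_map:
  assumes a: "a \<in> carrier (grp_alg G :: ('a \<Rightarrow> 'k::field) ring)"
  shows "fsupp (grp_alg_map h H a) \<subseteq> h ` fsupp a"
proof
  fix y assume y: "y \<in> fsupp (grp_alg_map h H a)"
  show "y \<in> h ` fsupp a"
  proof (rule ccontr)
    assume "y \<notin> h ` fsupp a"
    hence e: "{g \<in> fsupp a. h g = y} = {}" by auto
    have "grp_alg_map h H a y = 0" unfolding grp_alg_map_def e by simp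
    thus False using y by (simp add: fsupp_def)
  qed
qed

lemma alg_map_translate:
  assumes b: "b \<in> carrier (grp_alg G :: ('a \<Rightarrow> 'k::field) ring)" and k: "k \<in> carrier G"
    and y: "y \<in> carrier H" and S: "finite S" "S \<subseteq> carrier G" and kS: "(\<lambda>m. k \<otimes> m) ` fsupp b \<subseteq> S"
  shows "(\<Sum>g\<in>{g\<in>S. h g = y}. b (inv k \<otimes> g)) = grp_alg_map h H b (inv\<^bsub>H\<^esub> h k \<otimes>\<^bsub>H\<^esub> y)"
proof -
  have fb: "fsupp b \<subseteq> carrier G" using b by (auto simp: ga_carrier)
  let ?S' = "(\<lambda>g. inv k \<otimes> g) ` S"
  have sub: "fsupp b \<subseteq> ?S'"
  proof
    fix m assume m: "m \<in> fsupp b"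
    hence "k \<otimes> m \<in> S" using kS by blast
    moreover have "m = inv k \<otimes> (k \<otimes> m)" using m fb k by (auto simp: m_assoc[symmetric])
    ultimately show "m \<in> ?S'" by blast
  qed
  have fibre: "h (inv k \<otimes> g) = inv\<^bsub>H\<^esub> h k \<otimes>\<^bsub>H\<^esub> y \<longleftrightarrow> h g = y" if "g \<in> S" for g
  proof -
    have gc: "g \<in> carrier G" using that S by auto
    have "h (inv k \<otimes> g) = inv\<^bsub>H\<^esub> h k \<otimes>\<^bsub>H\<^esub> h g" using gc k by simp
    thus ?thesis using gc k y by (simp add: H.l_cancel)
  qed
  have inj: "inj_on (\<lambda>g. inv k \<otimes> g) {g\<in>S. h g = y}"
    by (rule inj_onI) (use S k G.l_cancel in blast)
  have "grp_alg_map h H b (inv\<^bsub>H\<^esub> h k \<otimes>\<^bsub>H\<^esub> y) = (\<Sum>m\<in>{m\<in>?S'. h m = inv\<^bsub>H\<^esub> h k \<otimes>\<^bsub>H\<^esub> y}. b m)"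
    by (rule alg_map_apply[OF b _ _ sub]) (use y k S in auto)
  also have "{m\<in>?S'. h m = inv\<^bsub>H\<^esub> h k \<otimes>\<^bsub>H\<^esub> y} = (\<lambda>g. inv k \<otimes> g) ` {g\<in>S. h g = y}"
    using fibre by auto
  also have "(\<Sum>m\<in>(\<lambda>g. inv k \<otimes> g) ` {g\<in>S. h g = y}. b m) = (\<Sum>g\<in>{g\<in>S. h g = y}. b (inv k \<otimes> g))"
    using inj by (simp add: sum.reindex)
  finally show ?thesis by simp
qed

text \<open>The induced map is multiplicative: group the terms of the convolution by the
  fibres of f.\<close>

lemma alg_map_mult:
  assumes a: "a \<in> carrier (grp_alg G :: ('a \<Rightarrow> 'k::field) ring)" and b: "b \<in> carrier (grp_alg G)"
  shows "grp_alg_map h H (a \<otimes>\<^bsub>grp_alg G\<^esub> b) = grp_alg_map h H a \<otimes>\<^bsub>grp_alg H\<^esub> grp_alg_map h H b"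
proof (rule ga_eqI[where G=H])
  have ab: "a \<otimes>\<^bsub>grp_alg G\<^esub> b \<in> carrier (grp_alg G)" by (simp add: ga_mult_closed[OF G.is_group] a b)
  show "grp_alg_map h H (a \<otimes>\<^bsub>grp_alg G\<^esub> b) \<in> carrier (grp_alg H)" by (rule alg_map_closed[OF ab])
  show "grp_alg_map h H a \<otimes>\<^bsub>grp_alg H\<^esub> grp_alg_map h H b \<in> carrier (grp_alg H)"
    by (simp add: ga_mult_closed[OF H.is_group] alg_map_closed a b)
  fix y assume y: "y \<in> carrier H"
  define Sa where "Sa = fsupp a"
  define S where "S = (\<lambda>(x,z). x \<otimes> z) ` (fsupp a \<times> fsupp b)"
  have fa: "finite Sa" "Sa \<subseteq> carrier G" using a by (auto simp: ga_carrier Sa_def)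
  have fb: "finite (fsupp b)" "fsupp b \<subseteq> carrier G" using b by (auto simp: ga_carrier)
  have fS: "finite S" "S \<subseteq> carrier G" using fa fb by (auto simp: S_def Sa_def)
  have "grp_alg_map h H (a \<otimes>\<^bsub>grp_alg G\<^esub> b) y = (\<Sum>g\<in>{g\<in>S. h g = y}. (a \<otimes>\<^bsub>grp_alg G\<^esub> b) g)"
    by (rule alg_map_apply[OF ab y fS(1)]) (simp add: S_def fsupp_ga_mult[OF G.is_group a b])
  also have "\<dots> = (\<Sum>g\<in>{g\<in>S. h g = y}. \<Sum>k\<in>Sa. a k * b (inv k \<otimes> g))"
    by (rule sum.cong[OF refl]) (use fS fa in \<open>auto simp: Sa_def intro: ga_mult_apply[OF G.is_group a]\<close>)
  also have "\<dots> = (\<Sum>k\<in>Sa. a k * (\<Sum>g\<in>{g\<in>S. h g = y}. b (inv k \<otimes> g)))"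
    by (subst sum.swap) (simp add: sum_distrib_left)
  also have "\<dots> = (\<Sum>k\<in>Sa. a k * grp_alg_map h H b (inv\<^bsub>H\<^esub> h k \<otimes>\<^bsub>H\<^esub> y))"
  proof (rule sum.cong[OF refl])
    fix k assume k: "k \<in> Sa"
    have "(\<lambda>m. k \<otimes> m) ` fsupp b \<subseteq> S" using k by (force simp: S_def Sa_def)
    thus "a k * (\<Sum>g\<in>{g\<in>S. h g = y}. b (inv k \<otimes> g)) = a k * grp_alg_map h H b (inv\<^bsub>H\<^esub> h k \<otimes>\<^bsub>H\<^esub> y)"
      using k fa by (subst alg_map_translate[OF b _ y fS]) auto
  qed
  also have "\<dots> = (\<Sum>y'\<in>h ` Sa. \<Sum>k\<in>{k\<in>Sa. h k = y'}. a k * grp_alg_map h H b (inv\<^bsub>H\<^esub> h k \<otimes>\<^bsub>H\<^esub> y))"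
    by (rule sum.image_gen[OF fa(1)])
  also have "\<dots> = (\<Sum>y'\<in>h ` Sa. grp_alg_map h H a y' * grp_alg_map h H b (inv\<^bsub>H\<^esub> y' \<otimes>\<^bsub>H\<^esub> y))"
  proof (rule sum.cong[OF refl])
    fix y' assume y': "y' \<in> h ` Sa"
    hence "grp_alg_map h H a y' = (\<Sum>k\<in>{k\<in>Sa. h k = y'}. a k)"
      using fa by (auto simp: grp_alg_map_def Sa_def)
    thus "(\<Sum>k\<in>{k\<in>Sa. h k = y'}. a k * grp_alg_map h H b (inv\<^bsub>H\<^esub> h k \<otimes>\<^bsub>H\<^esub> y)) =
        grp_alg_map h H a y' * grp_alg_map h H b (inv\<^bsub>H\<^esub> y' \<otimes>\<^bsub>H\<^esub> y)"
      by (simp add: sum_distrib_right)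
  qed
  also have "\<dots> = (grp_alg_map h H a \<otimes>\<^bsub>grp_alg H\<^esub> grp_alg_map h H b) y"
    by (rule ga_mult_apply[OF H.is_group alg_map_closed[OF a] y, symmetric])
      (use fa fsupp_alg_map[OF a] in \<open>auto simp: Sa_def\<close>)
  finally show "grp_alg_map h H (a \<otimes>\<^bsub>grp_alg G\<^esub> b) y = (grp_alg_map h H a \<otimes>\<^bsub>grp_alg H\<^esub> grp_alg_map h H b) y" .
qed

lemma alg_map_grp_star:
  assumes a: "a \<in> carrier (grp_alg G :: ('a \<Rightarrow> 'k::field) ring)"
  shows "grp_alg_map h H (grp_star G a) = grp_star H (grp_alg_map h H a)"
proof (rule ga_eqI[where G=H])
  show "grp_alg_map h H (grp_star G a) \<in> carrier (grp_alg H)" by (rule alg_map_closed[OF grp_star_closed[OF G.is_group a]])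
  show "grp_star H (grp_alg_map h H a) \<in> carrier (grp_alg H)" by (rule grp_star_closed[OF H.is_group alg_map_closed[OF a]])
  fix y assume y: "y \<in> carrier H"
  have fa: "finite (fsupp a)" "fsupp a \<subseteq> carrier G" using a by (auto simp: ga_carrier)
  let ?T = "(\<lambda>x. inv x) ` fsupp a"
  have sub: "fsupp (grp_star G a) \<subseteq> ?T" by (rule fsupp_grp_star[OF G.is_group])
  have "grp_alg_map h H (grp_star G a) y = (\<Sum>g\<in>{g\<in>?T. h g = y}. grp_star G a g)"
    by (rule alg_map_apply[OF grp_star_closed[OF G.is_group a] y _ sub]) (use fa in auto)
  also have "{g\<in>?T. h g = y} = (\<lambda>x. inv x) ` {k\<in>fsupp a. h k = inv\<^bsub>H\<^esub> y}"
  proof -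
    have "h (inv k) = y \<longleftrightarrow> h k = inv\<^bsub>H\<^esub> y" if "k \<in> fsupp a" for k
    proof -
      have kc: "k \<in> carrier G" using that fa by auto
      show ?thesis using kc y by (auto simp: H.inv_equality)
    qed
    thus ?thesis by auto
  qed
  also have "(\<Sum>g\<in>(\<lambda>x. inv x) ` {k\<in>fsupp a. h k = inv\<^bsub>H\<^esub> y}. grp_star G a g) = (\<Sum>k\<in>{k\<in>fsupp a. h k = inv\<^bsub>H\<^esub> y}. a k)"
  proof -
    have "inj_on (\<lambda>x. inv x) {k\<in>fsupp a. h k = inv\<^bsub>H\<^esub> y}" using fa by (auto simp: inj_on_def)
    hence "(\<Sum>g\<in>(\<lambda>x. inv x) ` {k\<in>fsupp a. h k = inv\<^bsub>H\<^esub> y}. grp_star G a g) = (\<Sum>k\<in>{k\<in>fsupp a. h k = inv\<^bsub>H\<^esub> y}. grp_star G a (inv k))"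
      by (simp add: sum.reindex)
    also have "\<dots> = (\<Sum>k\<in>{k\<in>fsupp a. h k = inv\<^bsub>H\<^esub> y}. a k)"
      by (rule sum.cong[OF refl]) (use fa in \<open>auto simp: grp_star_apply\<close>)
    finally show ?thesis .
  qed
  also have "\<dots> = grp_star H (grp_alg_map h H a) y"
    using y by (simp add: grp_star_apply grp_alg_map_def)
  finally show "grp_alg_map h H (grp_star G a) y = grp_star H (grp_alg_map h H a) y" .
qed

lemma alg_map_sym_part:
  assumes a: "a \<in> carrier (grp_alg G :: ('a \<Rightarrow> 'k::field) ring)"
  shows "grp_alg_map h H (sym_part G a) = sym_part H (grp_alg_map h H a)"
  unfolding sym_part_def
  by (simp add: alg_map_scale ga_add_closed[OF G.is_group] a grp_star_closed[OF G.is_group] alg_map_add alg_map_grp_star)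

text \<open>For surjective f the induced map is surjective: lift each support point.\<close>

lemma alg_map_surj:
  assumes surj: "h ` carrier G = carrier H"
    and z: "z \<in> carrier (grp_alg H :: ('c \<Rightarrow> 'k::field) ring)"
  shows "\<exists>x\<in>carrier (grp_alg G). grp_alg_map h H x = z"
proof -
  define s where "s = inv_into (carrier G) h"
  have fz: "finite (fsupp z)" "fsupp z \<subseteq> carrier H" using z by (auto simp: ga_carrier)
  have s1: "y \<in> carrier H \<Longrightarrow> s y \<in> carrier G" for y unfolding s_def using surj by (metis inv_into_into)
  have s2: "y \<in> carrier H \<Longrightarrow> h (s y) = y" for y unfolding s_def using surj by (simp add: f_inv_into_f)
  define x where "x = (\<lambda>g. if g \<in> s ` fsupp z then z (h g) else 0)"
  have xc: "x \<in> carrier (grp_alg G)"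
    by (rule ga_memI[of "s ` fsupp z"]) (use fz s1 in \<open>auto simp: x_def\<close>)
  have "grp_alg_map h H x = z"
  proof (rule ga_eqI[where G=H])
    show "grp_alg_map h H x \<in> carrier (grp_alg H)" by (rule alg_map_closed[OF xc])
    show "z \<in> carrier (grp_alg H)" by (rule z)
    fix y assume y: "y \<in> carrier H"
    have "grp_alg_map h H x y = (\<Sum>g\<in>{g\<in>s ` fsupp z. h g = y}. x g)"
      by (rule alg_map_apply[OF xc y]) (use fz in \<open>auto simp: x_def fsupp_def\<close>)
    also have "{g\<in>s ` fsupp z. h g = y} = (if y \<in> fsupp z then {s y} else {})"
      using fz s2 by auto
    also have "(\<Sum>g\<in>(if y \<in> fsupp z then {s y} else {}). x g) = z y"
      using fz s2 y by (auto simp: x_def fsupp_def)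
    finally show "grp_alg_map h H x y = z y" .
  qed
  thus ?thesis using xc by blast
qed

text \<open>The induced map sends I_G into I_H, since it sends generators to generators; hence it
  induces the map A_G \<rightarrow> A_H, computed on representatives.\<close>

lemma alg_map_comm_ideal:
  assumes i: "i \<in> (comm_ideal G :: ('a \<Rightarrow> 'k::field_char_0) set)"
  shows "grp_alg_map h H i \<in> comm_ideal H"
proof -
  interpret R: ring "grp_alg G :: ('a \<Rightarrow> 'k::field_char_0) ring" by (rule ring_grp_alg[OF G.is_group])
  interpret RH: ring "grp_alg H :: ('c \<Rightarrow> 'k::field_char_0) ring" by (rule ring_grp_alg[OF H.is_group])
  interpret IH: ideal "comm_ideal H :: ('c \<Rightarrow> 'k::field_char_0) set" "grp_alg H" by (rule ideal_comm_ideal[OF H.is_group])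
  let ?Q = "{x \<in> carrier (grp_alg G :: ('a \<Rightarrow> 'k::field_char_0) ring). grp_alg_map h H x \<in> comm_ideal H}"
  have "ideal ?Q (grp_alg G)"
  proof (rule R.idealI_closed)
    show "\<zero>\<^bsub>grp_alg G\<^esub> \<in> ?Q" by (simp add: alg_map_zero IH.I_zero_closed)
  next
    fix a b :: "'a \<Rightarrow> 'k" assume "a \<in> ?Q" "b \<in> ?Q"
    thus "a \<oplus>\<^bsub>grp_alg G\<^esub> b \<in> ?Q" by (simp add: alg_map_add IH.I_add_closed)
  next
    fix a :: "'a \<Rightarrow> 'k" assume "a \<in> ?Q"
    thus "\<ominus>\<^bsub>grp_alg G\<^esub> a \<in> ?Q" by (simp add: alg_map_neg IH.I_neg_closed)
  next
    fix a x :: "'a \<Rightarrow> 'k" assume "a \<in> ?Q" "x \<in> carrier (grp_alg G)"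
    thus "x \<otimes>\<^bsub>grp_alg G\<^esub> a \<in> ?Q" "a \<otimes>\<^bsub>grp_alg G\<^esub> x \<in> ?Q"
      by (simp_all add: alg_map_mult IH.I_l_closed IH.I_r_closed alg_map_closed)
  qed auto
  moreover have "{(a \<otimes>\<^bsub>grp_alg G\<^esub> b) \<ominus>\<^bsub>grp_alg G\<^esub> (b \<otimes>\<^bsub>grp_alg G\<^esub> a) | a b.
        a \<in> carrier (grp_alg G) \<and> b \<in> carrier (grp_alg G) \<and> grp_star G b = b} \<subseteq> ?Q"
  proof clarify
    fix a b :: "'a \<Rightarrow> 'k" assume a: "a \<in> carrier (grp_alg G)" and b: "b \<in> carrier (grp_alg G)" and bs: "grp_star G b = b"
    have "grp_star H (grp_alg_map h H b) = grp_alg_map h H b" using alg_map_grp_star[OF b] bs by simp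
    hence "grp_alg_map h H a \<otimes>\<^bsub>grp_alg H\<^esub> grp_alg_map h H b \<ominus>\<^bsub>grp_alg H\<^esub> grp_alg_map h H b \<otimes>\<^bsub>grp_alg H\<^esub> grp_alg_map h H a \<in> comm_ideal H"
      by (intro commutator_in_comm_ideal[OF H.is_group] alg_map_closed a b)
    thus "a \<otimes>\<^bsub>grp_alg G\<^esub> b \<ominus>\<^bsub>grp_alg G\<^esub> b \<otimes>\<^bsub>grp_alg G\<^esub> a \<in> carrier (grp_alg G) \<and>
         grp_alg_map h H (a \<otimes>\<^bsub>grp_alg G\<^esub> b \<ominus>\<^bsub>grp_alg G\<^esub> b \<otimes>\<^bsub>grp_alg G\<^esub> a) \<in> comm_ideal H"
      using a b by (simp add: alg_map_minus alg_map_mult)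
  qed
  ultimately have "comm_ideal G \<subseteq> ?Q" unfolding comm_ideal_def by (rule R.genideal_minimal)
  thus ?thesis using i by blast
qed

lemma A_map_cls:
  assumes x: "x \<in> carrier (grp_alg G :: ('a \<Rightarrow> 'k::field_char_0) ring)"
  shows "(A_map h G H (A_cls G x) :: ('c \<Rightarrow> 'k) set) = A_cls H (grp_alg_map h H x)"
proof -
  let ?r = "SOME y. y \<in> A_cls G x"
  have r: "?r \<in> carrier (grp_alg G :: ('a \<Rightarrow> 'k::field_char_0) ring)" "A_cls G ?r = A_cls G x"
    using A_some_rep[OF G.is_group A_cls_closed[OF G.is_group x]] by auto
  have "?r \<ominus>\<^bsub>grp_alg G\<^esub> x \<in> comm_ideal G" using r A_eq[OF G.is_group r(1) x] by simp
  hence "grp_alg_map h H (?r \<ominus>\<^bsub>grp_alg G\<^esub> x) \<in> comm_ideal H" by (rule alg_map_comm_ideal)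
  hence "grp_alg_map h H ?r \<ominus>\<^bsub>grp_alg H\<^esub> grp_alg_map h H x \<in> comm_ideal H" by (simp add: alg_map_minus r x)
  hence "A_cls H (grp_alg_map h H ?r) = A_cls H (grp_alg_map h H x)"
    using A_eq[OF H.is_group] alg_map_closed r x by blast
  thus ?thesis unfolding A_map_def by simp
qed

lemma sharp_kernel_clsI:
  assumes x: "x \<in> carrier (grp_alg G :: ('a \<Rightarrow> 'k::field_char_0) ring)"
    and s: "A_cls G x \<in> sharp G" and m: "grp_alg_map h H x \<in> comm_ideal H"
  shows "A_cls G x \<in> sharp_kernel h G H"
proof -
  have z: "\<zero>\<^bsub>A_alg H\<^esub> = (comm_ideal H :: ('c \<Rightarrow> 'k) set)" by (rule A_zero[OF H.is_group])
  show ?thesis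
    using s m A_map_cls[OF x] z A_zero_iff[OF H.is_group alg_map_closed[OF x]]
    by (simp add: sharp_kernel_def)
qed

lemma sharp_kernelD:
  assumes U: "U \<in> (sharp_kernel h G H :: ('a \<Rightarrow> 'k::field_char_0) set set)"
  shows "\<exists>x\<in>carrier (grp_alg G). U = A_cls G x \<and> grp_star G x = x \<and> grp_alg_map h H x \<in> comm_ideal H"
proof -
  have U1: "U \<in> sharp G" and U2: "(A_map h G H U :: ('c \<Rightarrow> 'k) set) = \<zero>\<^bsub>A_alg H\<^esub>" using U by (auto simp: sharp_kernel_def)
  obtain x where x: "x \<in> carrier (grp_alg G)" "U = A_cls G x" "grp_star G x = x" using sharp_symmetric_rep[OF G.is_group U1] by blast
  have z: "\<zero>\<^bsub>A_alg H\<^esub> = (comm_ideal H :: ('c \<Rightarrow> 'k) set)" by (rule A_zero[OF H.is_group])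
  have "A_cls H (grp_alg_map h H x) = comm_ideal H" using U2 x A_map_cls[OF x(1)] z by simp
  hence "grp_alg_map h H x \<in> comm_ideal H" using A_zero_iff[OF H.is_group alg_map_closed[OF x(1)]] by simp
  thus ?thesis using x by blast
qed

text \<open>ker f^# is an ideal of \<kappa>G^#: closure under the ring operations of \<kappa>G^# comes from
  \<kappa>G^# being a subring, and the images of the representatives stay in the ideal I_H.\<close>

lemma ideal_sharp_kernel: "ideal (sharp_kernel h G H :: ('a \<Rightarrow> 'k::field_char_0) set set) (sharp_ring G)"
proof -
  interpret R: ring "grp_alg G :: ('a \<Rightarrow> 'k) ring" by (rule ring_grp_alg[OF G.is_group])
  interpret IH: ideal "comm_ideal H :: ('c \<Rightarrow> 'k) set" "grp_alg H" by (rule ideal_comm_ideal[OF H.is_group])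
  interpret S: ring "sharp_ring G :: ('a \<Rightarrow> 'k) set ring" by (rule ring_sharp[OF G.is_group])
  have sub: "sharp_kernel h G H \<subseteq> (sharp G :: ('a \<Rightarrow> 'k) set set)" by (auto simp: sharp_kernel_def)
  show ?thesis
  proof (rule S.idealI_closed)
    show "(sharp_kernel h G H :: ('a \<Rightarrow> 'k) set set) \<subseteq> carrier (sharp_ring G)"
      using sub by (simp add: sharp_ring_simps)
  next
    have "A_cls G \<zero>\<^bsub>grp_alg G\<^esub> \<in> (sharp_kernel h G H :: ('a \<Rightarrow> 'k) set set)"
      by (rule sharp_kernel_clsI[OF R.zero_closed]) (use S.zero_closed in
          \<open>simp_all add: A_cls_zero[OF G.is_group] sharp_ring_simps alg_map_zero IH.I_zero_closed\<close>)
    thus "\<zero>\<^bsub>sharp_ring G\<^esub> \<in> (sharp_kernel h G H :: ('a \<Rightarrow> 'k) set set)"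
      by (simp add: A_cls_zero[OF G.is_group] sharp_ring_simps)
  next
    fix a b :: "('a \<Rightarrow> 'k) set" assume a: "a \<in> sharp_kernel h G H" and b: "b \<in> sharp_kernel h G H"
    obtain x where x: "x \<in> carrier (grp_alg G)" "a = A_cls G x" "grp_alg_map h H x \<in> comm_ideal H"
      using sharp_kernelD[OF a] by blast
    obtain y where y: "y \<in> carrier (grp_alg G)" "b = A_cls G y" "grp_alg_map h H y \<in> comm_ideal H"
      using sharp_kernelD[OF b] by blast
    have "A_cls G (x \<oplus>\<^bsub>grp_alg G\<^esub> y) \<in> sharp_kernel h G H"
      using sharp_add[OF G.is_group, of a b] a b sub x y
      by (intro sharp_kernel_clsI) (auto simp: A_add[OF G.is_group] alg_map_add IH.I_add_closed)
    thus "a \<oplus>\<^bsub>sharp_ring G\<^esub> b \<in> sharp_kernel h G H"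
      using x y by (simp add: sharp_ring_simps A_add[OF G.is_group])
  next
    fix a :: "('a \<Rightarrow> 'k) set" assume a: "a \<in> sharp_kernel h G H"
    obtain x where x: "x \<in> carrier (grp_alg G)" "a = A_cls G x" "grp_alg_map h H x \<in> comm_ideal H"
      using sharp_kernelD[OF a] by blast
    have as: "a \<in> sharp G" using a sub by blast
    have "A_cls G (\<ominus>\<^bsub>grp_alg G\<^esub> x) \<in> sharp_kernel h G H"
      using sharp_neg[OF G.is_group as] x
      by (intro sharp_kernel_clsI) (auto simp: A_neg[OF G.is_group] alg_map_neg IH.I_neg_closed)
    thus "\<ominus>\<^bsub>sharp_ring G\<^esub> a \<in> sharp_kernel h G H"
      by (subst sharp_ring_neg[OF G.is_group as]) (simp add: x A_neg[OF G.is_group])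
  next
    fix a b :: "('a \<Rightarrow> 'k) set" assume a: "a \<in> sharp_kernel h G H" and b: "b \<in> carrier (sharp_ring G)"
    obtain x where x: "x \<in> carrier (grp_alg G)" "a = A_cls G x" "grp_alg_map h H x \<in> comm_ideal H"
      using sharp_kernelD[OF a] by blast
    have bs: "b \<in> sharp G" using b by (simp add: sharp_ring_simps)
    obtain y where y: "y \<in> carrier (grp_alg G)" "b = A_cls G y"
      using sharp_symmetric_rep[OF G.is_group bs] by blast
    have as: "a \<in> sharp G" using a sub by blast
    have "A_cls G (y \<otimes>\<^bsub>grp_alg G\<^esub> x) \<in> sharp_kernel h G H"
      using sharp_mult[OF G.is_group bs as] x y
      by (intro sharp_kernel_clsI) (auto simp: A_mult[OF G.is_group] alg_map_mult IH.I_l_closed alg_map_closed)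
    thus "b \<otimes>\<^bsub>sharp_ring G\<^esub> a \<in> sharp_kernel h G H"
      using x y by (simp add: sharp_ring_simps A_mult[OF G.is_group])
    have "A_cls G (x \<otimes>\<^bsub>grp_alg G\<^esub> y) \<in> sharp_kernel h G H"
      using sharp_mult[OF G.is_group as bs] x y
      by (intro sharp_kernel_clsI) (auto simp: A_mult[OF G.is_group] alg_map_mult IH.I_r_closed alg_map_closed)
    thus "a \<otimes>\<^bsub>sharp_ring G\<^esub> b \<in> sharp_kernel h G H"
      using x y by (simp add: sharp_ring_simps A_mult[OF G.is_group])
  qed
qed

text \<open>Support reduction for the kernel of \<kappa>G \<rightarrow> \<kappa>H: if x is in the kernel and g0 in its support,
  then the coefficients of x on the fibre of f g0 sum to zero, so that fibre contains a second
  point g1 of the support; subtracting x(g0)(g0 - g1) stays in the kernel and removes g0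
  from the support without adding anything.\<close>

lemma alg_map_kernel_reduce:
  assumes xc: "x \<in> carrier (grp_alg G :: ('a \<Rightarrow> 'k::field) ring)"
    and mx: "grp_alg_map h H x = \<zero>\<^bsub>grp_alg H\<^esub>" and g0: "g0 \<in> fsupp x"
  obtains g1 where "g1 \<in> carrier G" "h g0 = h g1"
    "fsupp (x \<ominus>\<^bsub>grp_alg G\<^esub> ga_scale (x g0) (grp_elt g0 \<ominus>\<^bsub>grp_alg G\<^esub> grp_elt g1)) \<subset> fsupp x"
    "grp_alg_map h H (x \<ominus>\<^bsub>grp_alg G\<^esub> ga_scale (x g0) (grp_elt g0 \<ominus>\<^bsub>grp_alg G\<^esub> grp_elt g1))
       = \<zero>\<^bsub>grp_alg H\<^esub>"
proof -
  interpret R: ring "grp_alg G :: ('a \<Rightarrow> 'k) ring" by (rule ring_grp_alg[OF G.is_group])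
  interpret RH: ring "grp_alg H :: ('c \<Rightarrow> 'k) ring" by (rule ring_grp_alg[OF H.is_group])
  have fx: "finite (fsupp x)" "fsupp x \<subseteq> carrier G" using xc by (auto simp: ga_carrier)
  have g0c: "g0 \<in> carrier G" using g0 fx by auto
  define c where "c = x g0"
  have c0: "c \<noteq> 0" using g0 by (simp add: fsupp_def c_def)
  have fibre_sum: "(\<Sum>g\<in>{g\<in>fsupp x. h g = h g0}. x g) = 0"
  proof -
    have "grp_alg_map h H x (h g0) = 0" using mx by (simp add: ga_zero)
    thus ?thesis using g0c by (simp add: grp_alg_map_def)
  qed
  obtain g1 where g1: "g1 \<in> fsupp x" "g1 \<noteq> g0" "h g1 = h g0"
  proof -
    have "{g\<in>fsupp x. h g = h g0} \<noteq> {g0}"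
    proof
      assume "{g\<in>fsupp x. h g = h g0} = {g0}"
      hence "(\<Sum>g\<in>{g\<in>fsupp x. h g = h g0}. x g) = x g0" by simp
      thus False using fibre_sum c0 c_def by simp
    qed
    moreover have "g0 \<in> {g\<in>fsupp x. h g = h g0}" using g0 by simp
    ultimately show ?thesis using that by blast
  qed
  have g1c: "g1 \<in> carrier G" using g1 fx by auto
  have e0: "(grp_elt g0 :: 'a \<Rightarrow> 'k) \<in> carrier (grp_alg G)" by (rule grp_elt_closed[OF G.is_group g0c])
  have e1: "(grp_elt g1 :: 'a \<Rightarrow> 'k) \<in> carrier (grp_alg G)" by (rule grp_elt_closed[OF G.is_group g1c])
  define d where "d = ga_scale c (grp_elt g0 \<ominus>\<^bsub>grp_alg G\<^esub> grp_elt g1)"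
  have dc: "d \<in> carrier (grp_alg G)" unfolding d_def using e0 e1 by (simp add: ga_scale_closed[OF G.is_group])
  have diff_apply: "(x \<ominus>\<^bsub>grp_alg G\<^esub> d) g = x g - c * (grp_elt g0 g - grp_elt g1 g)" for g
    using xc dc e0 e1 by (simp add: ga_minus[OF G.is_group] d_def ga_scale_apply)
  have "fsupp (x \<ominus>\<^bsub>grp_alg G\<^esub> d) \<subseteq> fsupp x - {g0}"
    using g1(1,2) by (auto simp: fsupp_def diff_apply grp_elt_def c_def split: if_splits)
  hence "fsupp (x \<ominus>\<^bsub>grp_alg G\<^esub> d) \<subset> fsupp x" using g0 by blast
  moreover have "grp_alg_map h H (x \<ominus>\<^bsub>grp_alg G\<^esub> d) = \<zero>\<^bsub>grp_alg H\<^esub>"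
  proof -
    have "grp_alg_map h H (grp_elt g0 \<ominus>\<^bsub>grp_alg G\<^esub> grp_elt g1) = (\<zero>\<^bsub>grp_alg H\<^esub> :: 'c \<Rightarrow> 'k)"
      using e0 e1 g1(3) by (simp add: alg_map_minus alg_map_grp_elt g0c g1c
          RH.r_right_minus_eq grp_elt_closed[OF H.is_group])
    hence "grp_alg_map h H d = \<zero>\<^bsub>grp_alg H\<^esub>" unfolding d_def
      using e0 e1 by (simp add: alg_map_scale) (rule ext, simp add: ga_scale_apply ga_zero)
    thus ?thesis using xc dc mx by (simp add: alg_map_minus RH.r_right_minus_eq)
  qed
  ultimately show ?thesis using that[OF g1c g1(3)[symmetric]] by (simp add: d_def c_def)
qed

text \<open>The kernel of \<kappa>G \<rightarrow> \<kappa>H is spanned by the elements c (g0 - g1) with f g0 = f g1,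
  stated as an induction principle over the size of the support.\<close>

lemma alg_map_kernel_induct:
  assumes x: "x \<in> carrier (grp_alg G :: ('a \<Rightarrow> 'k::field) ring)"
    and mx: "grp_alg_map h H x = \<zero>\<^bsub>grp_alg H\<^esub>"
    and zero: "Q \<zero>\<^bsub>grp_alg G\<^esub>"
    and step: "\<And>y c g0 g1. Q y \<Longrightarrow> g0 \<in> carrier G \<Longrightarrow> g1 \<in> carrier G \<Longrightarrow> h g0 = h g1 \<Longrightarrow>
      Q (y \<oplus>\<^bsub>grp_alg G\<^esub> ga_scale c (grp_elt g0 \<ominus>\<^bsub>grp_alg G\<^esub> grp_elt g1))"
  shows "Q x"
  using x mx
proof (induction "card (fsupp x)" arbitrary: x rule: less_induct)
  case less
  interpret R: ring "grp_alg G :: ('a \<Rightarrow> 'k) ring" by (rule ring_grp_alg[OF G.is_group])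
  show ?case
  proof (cases "fsupp x = {}")
    case True
    hence "x = \<zero>\<^bsub>grp_alg G\<^esub>" by (auto simp: fsupp_def ga_zero)
    thus ?thesis using zero by simp
  next
    case False
    then obtain g0 where g0: "g0 \<in> fsupp x" by blast
    obtain g1 where g1: "g1 \<in> carrier G" "h g0 = h g1"
      and smaller: "fsupp (x \<ominus>\<^bsub>grp_alg G\<^esub> ga_scale (x g0) (grp_elt g0 \<ominus>\<^bsub>grp_alg G\<^esub> grp_elt g1)) \<subset> fsupp x"
      and ker: "grp_alg_map h H (x \<ominus>\<^bsub>grp_alg G\<^esub> ga_scale (x g0) (grp_elt g0 \<ominus>\<^bsub>grp_alg G\<^esub> grp_elt g1))
                  = \<zero>\<^bsub>grp_alg H\<^esub>"
      by (rule alg_map_kernel_reduce[OF less.prems g0])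
    have fx: "finite (fsupp x)" "fsupp x \<subseteq> carrier G" using less.prems(1) by (auto simp: ga_carrier)
    have g0c: "g0 \<in> carrier G" using g0 fx by auto
    define d where "d = ga_scale (x g0) (grp_elt g0 \<ominus>\<^bsub>grp_alg G\<^esub> grp_elt g1)"
    have dc: "d \<in> carrier (grp_alg G)"
      unfolding d_def by (intro ga_scale_closed[OF G.is_group] R.minus_closed grp_elt_closed[OF G.is_group] g0c g1)
    have "Q (x \<ominus>\<^bsub>grp_alg G\<^esub> d)"
      using less.hyps[OF psubset_card_mono[OF fx(1) smaller]] less.prems(1) dc ker by (simp add: d_def)
    hence "Q ((x \<ominus>\<^bsub>grp_alg G\<^esub> d) \<oplus>\<^bsub>grp_alg G\<^esub> d)" unfolding d_def by (rule step[OF _ g0c g1])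
    thus ?thesis using R.minus_add_cancel[OF less.prems(1) dc] by simp
  qed
qed

text \<open>Each generator of L^# lies in the kernel of f^#: on a representative it is the
  symmetrisation of x (l - 1), and l - 1 maps to zero since f l = 1.\<close>

lemma sharp_gen_in_kernel:
  assumes Lk: "L \<subseteq> kernel G H h"
  shows "(sharp_gens G L :: ('a \<Rightarrow> 'k::field_char_0) set set) \<subseteq> sharp_kernel h G H"
proof
  interpret R: ring "grp_alg G :: ('a \<Rightarrow> 'k) ring" by (rule ring_grp_alg[OF G.is_group])
  interpret RH: ring "grp_alg H :: ('c \<Rightarrow> 'k) ring" by (rule ring_grp_alg[OF H.is_group])
  interpret IH: ideal "comm_ideal H :: ('c \<Rightarrow> 'k) set" "grp_alg H" by (rule ideal_comm_ideal[OF H.is_group])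
  fix V :: "('a \<Rightarrow> 'k) set" assume "V \<in> sharp_gens G L"
  then obtain U l where U: "U \<in> carrier (A_alg G)" and l: "l \<in> L"
    and V: "V = A_bar G (U \<otimes>\<^bsub>A_alg G\<^esub> A_cls G (grp_elt l)) \<ominus>\<^bsub>A_alg G\<^esub> A_bar G U"
    by (auto simp: sharp_gens_def)
  have lk: "l \<in> carrier G" "h l = \<one>\<^bsub>H\<^esub>" using Lk l by (auto simp: kernel_def)
  obtain x where x: "x \<in> carrier (grp_alg G)" "U = A_cls G x" using A_some_rep[OF G.is_group U] by blast
  have el: "(grp_elt l :: 'a \<Rightarrow> 'k) \<in> carrier (grp_alg G)" by (rule grp_elt_closed[OF G.is_group lk(1)])
  define y where "y = x \<otimes>\<^bsub>grp_alg G\<^esub> (grp_elt l \<ominus>\<^bsub>grp_alg G\<^esub> \<one>\<^bsub>grp_alg G\<^esub>)"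
  have yc: "y \<in> carrier (grp_alg G)" unfolding y_def using x el by simp
  have my: "grp_alg_map h H y = \<zero>\<^bsub>grp_alg H\<^esub>"
  proof -
    have "grp_alg_map h H (grp_elt l \<ominus>\<^bsub>grp_alg G\<^esub> \<one>\<^bsub>grp_alg G\<^esub>) = (\<zero>\<^bsub>grp_alg H\<^esub> :: 'c \<Rightarrow> 'k)"
      using el by (simp add: alg_map_minus alg_map_grp_elt lk ga_one RH.r_right_minus_eq
          grp_elt_closed[OF G.is_group] grp_elt_closed[OF H.is_group])
    thus ?thesis unfolding y_def using x el by (simp add: alg_map_mult alg_map_closed)
  qed
  have "grp_alg_map h H (sym_part G y) = \<zero>\<^bsub>grp_alg H\<^esub>"
    by (rule ext) (simp add: alg_map_sym_part yc my sym_part_apply[OF H.is_group] grp_star_apply ga_zero)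
  hence "A_cls G (sym_part G y) \<in> sharp_kernel h G H"
    using sym_part_closed[OF G.is_group yc] grp_star_sym_part[OF G.is_group yc]
    by (intro sharp_kernel_clsI sharp_cls_symI[OF G.is_group]) (simp_all add: IH.I_zero_closed)
  thus "V \<in> sharp_kernel h G H"
    using sharp_gen_cls[OF G.is_group x(1) lk(1)] by (simp add: V x(2) y_def)
qed

lemma sharp_ideal_subset_kernel:
  assumes Lk: "L \<subseteq> kernel G H h"
  shows "(sharp_ideal G L :: ('a \<Rightarrow> 'k::field_char_0) set set) \<subseteq> sharp_kernel h G H"
proof -
  interpret S: ring "sharp_ring G :: ('a \<Rightarrow> 'k) set ring" by (rule ring_sharp[OF G.is_group])
  show ?thesis unfolding sharp_ideal_genideal
    by (rule S.genideal_minimal[OF ideal_sharp_kernel sharp_gen_in_kernel[OF Lk]])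
qed

text \<open>Since its generators lie in the ideal ker f^#, the set L^# is an ideal of \<kappa>G^#.\<close>

lemma ideal_sharp_ideal:
  assumes Lk: "L \<subseteq> kernel G H h"
  shows "ideal (sharp_ideal G L :: ('a \<Rightarrow> 'k::field_char_0) set set) (sharp_ring G)"
proof -
  interpret S: ring "sharp_ring G :: ('a \<Rightarrow> 'k) set ring" by (rule ring_sharp[OF G.is_group])
  interpret K: ideal "sharp_kernel h G H :: ('a \<Rightarrow> 'k) set set" "sharp_ring G" by (rule ideal_sharp_kernel)
  show ?thesis unfolding sharp_ideal_genideal
    by (rule S.genideal_ideal) (use sharp_gen_in_kernel[OF Lk] K.a_subset in blast)
qed

end

section \<open>The reverse inclusion\<close>

text \<open>Fix an ideal J of \<kappa>G^# containing the generators of L^#.  We show that J contains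
  the kernel of f^#; the theorem then follows with J = L^#.\<close>

locale kernel_in_ideal = group_hom G H h for G (structure) and H (structure) and h +
  fixes L :: "'a set" and J :: "('a \<Rightarrow> 'k::field_char_0) set set"
  assumes surj: "h ` carrier G = carrier H"
    and Lker: "L \<subseteq> kernel G H h"
    and ncl: "normal_closure G L = kernel G H h"
    and Jid: "ideal J (sharp_ring G)"
    and gens_J: "sharp_gens G L \<subseteq> J"
begin

sublocale R: ring "grp_alg G :: ('a \<Rightarrow> 'k) ring" by (rule ring_grp_alg[OF G.is_group])
sublocale IG: ideal "comm_ideal G :: ('a \<Rightarrow> 'k) set" "grp_alg G" by (rule ideal_comm_ideal[OF G.is_group])
sublocale RH: ring "grp_alg H :: ('c \<Rightarrow> 'k) ring" by (rule ring_grp_alg[OF H.is_group])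
sublocale IH: ideal "comm_ideal H :: ('c \<Rightarrow> 'k) set" "grp_alg H" by (rule ideal_comm_ideal[OF H.is_group])
sublocale JI: ideal J "sharp_ring G" by (rule Jid)

text \<open>This is an additive
  subgroup containing I_G, and membership of a product does not depend on the order of the
  factors (symmetrisation is a trace modulo I_G).\<close>

definition symJ :: "('a \<Rightarrow> 'k) set" where
  "symJ = {x \<in> carrier (grp_alg G). A_cls G (sym_part G x) \<in> J}"

lemma symJ_add: "x \<in> symJ \<Longrightarrow> y \<in> symJ \<Longrightarrow> x \<oplus>\<^bsub>grp_alg G\<^esub> y \<in> symJ"
  using JI.I_add_closed
  by (auto simp: symJ_def sym_part_add[OF G.is_group] A_add[OF G.is_group, symmetric]
      sym_part_closed[OF G.is_group] sharp_ring_simps)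

lemma symJ_neg:
  assumes x: "x \<in> symJ"
  shows "\<ominus>\<^bsub>grp_alg G\<^esub> x \<in> symJ"
proof -
  have xc: "x \<in> carrier (grp_alg G)" and xJ: "A_cls G (sym_part G x) \<in> J" using x by (auto simp: symJ_def)
  have "A_cls G (sym_part G (\<ominus>\<^bsub>grp_alg G\<^esub> x)) = \<ominus>\<^bsub>sharp_ring G\<^esub> A_cls G (sym_part G x)"
    using JI.Icarr[OF xJ]
    by (simp add: sym_part_neg[OF G.is_group xc] A_neg[OF G.is_group] sym_part_closed[OF G.is_group xc]
        sharp_ring_neg[OF G.is_group] sharp_ring_simps)
  thus ?thesis using JI.I_neg_closed[OF xJ] xc by (simp add: symJ_def)
qed

lemma symJ_comm_ideal:
  assumes i: "i \<in> comm_ideal G"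
  shows "i \<in> symJ"
proof -
  have ic: "i \<in> carrier (grp_alg G)" using i by simp
  have "A_cls G (sym_part G i) = \<zero>\<^bsub>sharp_ring G\<^esub>"
    using A_zero_iff[OF G.is_group sym_part_closed[OF G.is_group ic]] comm_ideal_sym_part[OF G.is_group i]
    by (simp add: sharp_ring_simps A_zero[OF G.is_group])
  thus ?thesis using ic JI.I_zero_closed by (simp add: symJ_def)
qed

lemma symJ_swap:
  assumes x: "x \<in> carrier (grp_alg G)" and y: "y \<in> carrier (grp_alg G)"
    and yx: "y \<otimes>\<^bsub>grp_alg G\<^esub> x \<in> symJ"
  shows "x \<otimes>\<^bsub>grp_alg G\<^esub> y \<in> symJ"
proof -
  have "A_cls G (sym_part G (x \<otimes>\<^bsub>grp_alg G\<^esub> y)) = A_cls G (sym_part G (y \<otimes>\<^bsub>grp_alg G\<^esub> x))"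
    using A_eq[OF G.is_group sym_part_closed[OF G.is_group R.m_closed[OF x y]]
        sym_part_closed[OF G.is_group R.m_closed[OF y x]]] sym_part_commute[OF G.is_group x y]
    by simp
  thus ?thesis using yx x y by (simp add: symJ_def)
qed

text \<open>This is where the hypothesis on J enters.\<close>

lemma symJ_gen:
  assumes u: "u \<in> carrier (grp_alg G)" and l: "l \<in> L"
  shows "u \<otimes>\<^bsub>grp_alg G\<^esub> (grp_elt l \<ominus>\<^bsub>grp_alg G\<^esub> \<one>\<^bsub>grp_alg G\<^esub>) \<in> symJ"
proof -
  have lc: "l \<in> carrier G" using l Lker by (auto simp: kernel_def)
  have "A_bar G (A_cls G u \<otimes>\<^bsub>A_alg G\<^esub> A_cls G (grp_elt l)) \<ominus>\<^bsub>A_alg G\<^esub> A_bar G (A_cls G u) \<in> J"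
    using gens_J A_cls_closed[OF G.is_group u] l by (auto simp: sharp_gens_def)
  moreover have "u \<otimes>\<^bsub>grp_alg G\<^esub> (grp_elt l \<ominus>\<^bsub>grp_alg G\<^esub> \<one>\<^bsub>grp_alg G\<^esub>) \<in> carrier (grp_alg G)"
    by (intro R.m_closed R.minus_closed R.one_closed u grp_elt_closed[OF G.is_group lc])
  ultimately show ?thesis by (simp add: symJ_def sharp_gen_cls[OF G.is_group u lc])
qed

text \<open>The largest two-sided ideal of \<kappa>G contained in symJ.\<close>

definition core :: "('a \<Rightarrow> 'k) set" where
  "core = {x \<in> carrier (grp_alg G). \<forall>a\<in>carrier (grp_alg G). \<forall>b\<in>carrier (grp_alg G).
     a \<otimes>\<^bsub>grp_alg G\<^esub> x \<otimes>\<^bsub>grp_alg G\<^esub> b \<in> symJ}"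

lemma core_carrier: "x \<in> core \<Longrightarrow> x \<in> carrier (grp_alg G)"
  by (simp add: core_def)

lemma core_symJ: "x \<in> core \<Longrightarrow> x \<in> symJ"
  unfolding core_def using R.one_closed by (metis (no_types, lifting) R.l_one R.r_one R.m_closed mem_Collect_eq)

lemma core_add: "x \<in> core \<Longrightarrow> y \<in> core \<Longrightarrow> x \<oplus>\<^bsub>grp_alg G\<^esub> y \<in> core"
  unfolding core_def by (auto simp: R.r_distr R.l_distr intro!: symJ_add)

lemma core_neg: "x \<in> core \<Longrightarrow> \<ominus>\<^bsub>grp_alg G\<^esub> x \<in> core"
  unfolding core_def by (auto simp: R.r_minus R.l_minus intro!: symJ_neg)

lemma core_lmult: "x \<in> core \<Longrightarrow> c \<in> carrier (grp_alg G) \<Longrightarrow> c \<otimes>\<^bsub>grp_alg G\<^esub> x \<in> core"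
  unfolding core_def by (auto simp: R.m_assoc[symmetric])

lemma core_rmult: "x \<in> core \<Longrightarrow> c \<in> carrier (grp_alg G) \<Longrightarrow> x \<otimes>\<^bsub>grp_alg G\<^esub> c \<in> core"
  unfolding core_def by (auto simp: R.m_assoc)

lemma core_comm_ideal:
  assumes i: "i \<in> comm_ideal G"
  shows "i \<in> core"
  unfolding core_def
proof (intro CollectI conjI ballI)
  show "i \<in> carrier (grp_alg G)" using i by simp
  fix a b assume a: "a \<in> carrier (grp_alg G :: ('a \<Rightarrow> 'k) ring)" and b: "b \<in> carrier (grp_alg G :: ('a \<Rightarrow> 'k) ring)"
  show "a \<otimes>\<^bsub>grp_alg G\<^esub> i \<otimes>\<^bsub>grp_alg G\<^esub> b \<in> symJ"
    by (rule symJ_comm_ideal, rule IG.I_r_closed[OF IG.I_l_closed[OF i a] b])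
qed

text \<open>The key use of the trace property: a x (l - 1) b \<in> symJ follows from
  b a x (l - 1) \<in> symJ, which is a hypothesis on J.\<close>

lemma core_gen:
  assumes l: "l \<in> L"
  shows "grp_elt l \<ominus>\<^bsub>grp_alg G\<^esub> \<one>\<^bsub>grp_alg G\<^esub> \<in> core"
proof -
  have lc: "l \<in> carrier G" using l Lker by (auto simp: kernel_def)
  have el: "(grp_elt l :: 'a \<Rightarrow> 'k) \<in> carrier (grp_alg G)" by (rule grp_elt_closed[OF G.is_group lc])
  show ?thesis unfolding core_def
  proof (intro CollectI conjI ballI)
    show "grp_elt l \<ominus>\<^bsub>grp_alg G\<^esub> \<one>\<^bsub>grp_alg G\<^esub> \<in> carrier (grp_alg G :: ('a \<Rightarrow> 'k) ring)" using el by simp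
    fix a b assume a: "a \<in> carrier (grp_alg G :: ('a \<Rightarrow> 'k) ring)" and b: "b \<in> carrier (grp_alg G :: ('a \<Rightarrow> 'k) ring)"
    have "(b \<otimes>\<^bsub>grp_alg G\<^esub> a) \<otimes>\<^bsub>grp_alg G\<^esub> (grp_elt l \<ominus>\<^bsub>grp_alg G\<^esub> \<one>\<^bsub>grp_alg G\<^esub>) \<in> symJ"
      by (rule symJ_gen[OF _ l]) (use a b in simp)
    hence "b \<otimes>\<^bsub>grp_alg G\<^esub> (a \<otimes>\<^bsub>grp_alg G\<^esub> (grp_elt l \<ominus>\<^bsub>grp_alg G\<^esub> \<one>\<^bsub>grp_alg G\<^esub>)) \<in> symJ"
      using a b el by (simp add: R.m_assoc)
    thus "a \<otimes>\<^bsub>grp_alg G\<^esub> (grp_elt l \<ominus>\<^bsub>grp_alg G\<^esub> \<one>\<^bsub>grp_alg G\<^esub>) \<otimes>\<^bsub>grp_alg G\<^esub> b \<in> symJ"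
      by (rule symJ_swap[rotated 2]) (use a b el in simp_all)
  qed
qed

abbreviation (input) basis :: "'a \<Rightarrow> 'a \<Rightarrow> 'k" where
  "basis k \<equiv> grp_elt k"

lemma basis_closed: "k \<in> carrier G \<Longrightarrow> basis k \<in> carrier (grp_alg G)"
  by (rule grp_elt_closed[OF G.is_group])

lemma basis_mult: "k \<in> carrier G \<Longrightarrow> k' \<in> carrier G \<Longrightarrow> basis (k \<otimes> k') = basis k \<otimes>\<^bsub>grp_alg G\<^esub> basis k'"
  by (rule grp_elt_mult[OF G.is_group, symmetric])

lemma basis_one: "basis \<one> = \<one>\<^bsub>grp_alg G\<^esub>"
  by (simp add: ga_one)

definition N_core :: "'a set" where
  "N_core = {k \<in> carrier G. basis k \<ominus>\<^bsub>grp_alg G\<^esub> \<one>\<^bsub>grp_alg G\<^esub> \<in> core}"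

text \<open>Since core is a two-sided ideal, N_core is a subgroup of G:
  1 - 1 = 0, k\<inverse> - 1 = -k\<inverse>(k - 1) and k k' - 1 = k (k' - 1) + (k - 1).\<close>

lemma subgroup_N_core: "subgroup N_core G"
proof (rule G.subgroupI)
  show "N_core \<subseteq> carrier G" by (auto simp: N_core_def)
  have "basis \<one> \<ominus>\<^bsub>grp_alg G\<^esub> \<one>\<^bsub>grp_alg G\<^esub> = \<zero>\<^bsub>grp_alg G\<^esub>"
    by (simp add: basis_one a_minus_def R.r_neg)
  hence "\<one> \<in> N_core" by (simp add: N_core_def core_comm_ideal IG.I_zero_closed)
  thus "N_core \<noteq> {}" by blast
next
  fix k assume k: "k \<in> N_core"
  hence kc: "k \<in> carrier G" and kP: "basis k \<ominus>\<^bsub>grp_alg G\<^esub> \<one>\<^bsub>grp_alg G\<^esub> \<in> core"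
    by (auto simp: N_core_def)
  have "basis (inv k) \<otimes>\<^bsub>grp_alg G\<^esub> basis k = \<one>\<^bsub>grp_alg G\<^esub>"
    using kc by (simp add: basis_mult[symmetric] basis_one)
  hence "basis (inv k) \<ominus>\<^bsub>grp_alg G\<^esub> \<one>\<^bsub>grp_alg G\<^esub>
      = \<ominus>\<^bsub>grp_alg G\<^esub> (basis (inv k) \<otimes>\<^bsub>grp_alg G\<^esub> (basis k \<ominus>\<^bsub>grp_alg G\<^esub> \<one>\<^bsub>grp_alg G\<^esub>))"
    using R.neg_mult_minus_one[OF basis_closed[OF kc] basis_closed[OF G.inv_closed[OF kc]]] by simp
  also have "\<dots> \<in> core" using kP kc by (intro core_neg core_lmult basis_closed) auto
  finally show "inv k \<in> N_core" using kc by (simp add: N_core_def)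
next
  fix k k' assume "k \<in> N_core" and "k' \<in> N_core"
  hence kc: "k \<in> carrier G" "k' \<in> carrier G"
    and kP: "basis k \<ominus>\<^bsub>grp_alg G\<^esub> \<one>\<^bsub>grp_alg G\<^esub> \<in> core" "basis k' \<ominus>\<^bsub>grp_alg G\<^esub> \<one>\<^bsub>grp_alg G\<^esub> \<in> core"
    by (auto simp: N_core_def)
  have "basis (k \<otimes> k') \<ominus>\<^bsub>grp_alg G\<^esub> \<one>\<^bsub>grp_alg G\<^esub>
      = basis k \<otimes>\<^bsub>grp_alg G\<^esub> (basis k' \<ominus>\<^bsub>grp_alg G\<^esub> \<one>\<^bsub>grp_alg G\<^esub>) \<oplus>\<^bsub>grp_alg G\<^esub> (basis k \<ominus>\<^bsub>grp_alg G\<^esub> \<one>\<^bsub>grp_alg G\<^esub>)"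
    using kc by (simp add: basis_mult R.mult_minus_one_decomp basis_closed)
  also have "\<dots> \<in> core" using kP kc by (intro core_add core_lmult basis_closed) auto
  finally show "k \<otimes> k' \<in> N_core" using kc by (simp add: N_core_def)
qed

text \<open>\<dots> and it is normal, since x k x\<inverse> - 1 = x (k - 1) x\<inverse>.\<close>

lemma N_core_normal: "N_core \<lhd> G"
proof -
  have "x \<otimes> k \<otimes> inv x \<in> N_core" if x: "x \<in> carrier G" and k: "k \<in> N_core" for x k
  proof -
    have kc: "k \<in> carrier G" and kP: "basis k \<ominus>\<^bsub>grp_alg G\<^esub> \<one>\<^bsub>grp_alg G\<^esub> \<in> core"
      using k by (auto simp: N_core_def)
    have "basis x \<otimes>\<^bsub>grp_alg G\<^esub> basis (inv x) = \<one>\<^bsub>grp_alg G\<^esub>"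
      using x by (simp add: basis_mult[symmetric] basis_one)
    hence "basis (x \<otimes> k \<otimes> inv x) \<ominus>\<^bsub>grp_alg G\<^esub> \<one>\<^bsub>grp_alg G\<^esub>
        = basis x \<otimes>\<^bsub>grp_alg G\<^esub> (basis k \<ominus>\<^bsub>grp_alg G\<^esub> \<one>\<^bsub>grp_alg G\<^esub>) \<otimes>\<^bsub>grp_alg G\<^esub> basis (inv x)"
      using x kc by (simp add: basis_mult R.conj_minus_one basis_closed)
    also have "\<dots> \<in> core" using kP kc x by (intro core_rmult core_lmult basis_closed) auto
    finally show ?thesis using x kc by (simp add: N_core_def)
  qed
  thus ?thesis using subgroup_N_core G.normal_inv_iff by blast
qed

lemma kernel_N_core: "kernel G H h \<subseteq> N_core"
proof -
  have "L \<subseteq> N_core" using Lker core_gen by (auto simp: N_core_def kernel_def)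
  hence "normal_closure G L \<subseteq> N_core" unfolding normal_closure_def using N_core_normal by blast
  thus ?thesis using ncl by simp
qed

text \<open>Consequently core contains every multiple of g0 - g1 with f g0 = f g1, because
  g0 - g1 = g1 (g1\<inverse> g0 - 1) and g1\<inverse> g0 \<in> K.\<close>

lemma scaled_diff_core:
  assumes g0: "g0 \<in> carrier G" and g1: "g1 \<in> carrier G" and eq: "h g0 = h g1"
  shows "ga_scale c (basis g0 \<ominus>\<^bsub>grp_alg G\<^esub> basis g1) \<in> core"
proof -
  let ?k = "inv g1 \<otimes> g0"
  have kc: "?k \<in> carrier G" using g0 g1 by simp
  have "h ?k = \<one>\<^bsub>H\<^esub>" using g0 g1 eq by simp
  hence "?k \<in> N_core" using kernel_N_core kc by (auto simp: kernel_def)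
  hence kP: "basis ?k \<ominus>\<^bsub>grp_alg G\<^esub> \<one>\<^bsub>grp_alg G\<^esub> \<in> core" by (simp add: N_core_def)
  have "basis g1 \<otimes>\<^bsub>grp_alg G\<^esub> basis ?k = basis g0"
    using g0 g1 by (simp add: basis_mult[symmetric] G.m_assoc[symmetric])
  hence "basis g1 \<otimes>\<^bsub>grp_alg G\<^esub> (basis ?k \<ominus>\<^bsub>grp_alg G\<^esub> \<one>\<^bsub>grp_alg G\<^esub>) = basis g0 \<ominus>\<^bsub>grp_alg G\<^esub> basis g1"
    using R.mult_minus_one[OF basis_closed[OF g1] basis_closed[OF kc]] by simp
  hence "basis g0 \<ominus>\<^bsub>grp_alg G\<^esub> basis g1 \<in> core" using core_lmult[OF kP basis_closed[OF g1]] by simp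
  hence "ga_scale c \<one>\<^bsub>grp_alg G\<^esub> \<otimes>\<^bsub>grp_alg G\<^esub> (basis g0 \<ominus>\<^bsub>grp_alg G\<^esub> basis g1) \<in> core"
    by (rule core_lmult) (rule ga_scale_closed[OF G.is_group R.one_closed])
  thus ?thesis
    by (subst ga_scale_eq_mult[OF G.is_group]) (simp_all add: basis_closed g0 g1)
qed

lemma alg_map_kernel_core:
  assumes x: "x \<in> carrier (grp_alg G :: ('a \<Rightarrow> 'k) ring)" and mx: "grp_alg_map h H x = \<zero>\<^bsub>grp_alg H\<^esub>"
  shows "x \<in> core"
  using x mx
proof (rule alg_map_kernel_induct)
  show "\<zero>\<^bsub>grp_alg G\<^esub> \<in> core" by (rule core_comm_ideal[OF IG.I_zero_closed])
qed (simp add: core_add scaled_diff_core)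

text \<open>The image of core in \<kappa>H, described as the set of z all of whose preimages lie in core
  (the same set, as core contains the kernel).  It is an ideal containing I_H, because
  symmetric elements of \<kappa>H lift to symmetric elements of \<kappa>G.\<close>

definition core_image :: "('c \<Rightarrow> 'k) set" where
  "core_image = {z \<in> carrier (grp_alg H). \<forall>x\<in>carrier (grp_alg G :: ('a \<Rightarrow> 'k) ring).
     grp_alg_map h H x = z \<longrightarrow> x \<in> core}"

lemma core_imageI:
  assumes x0: "x0 \<in> core"
  shows "grp_alg_map h H x0 \<in> core_image"
proof -
  have x0c: "x0 \<in> carrier (grp_alg G)" by (rule core_carrier[OF x0])
  have "x \<in> core" if x: "x \<in> carrier (grp_alg G)" and e: "grp_alg_map h H x = grp_alg_map h H x0" for x
  proof -
    have "grp_alg_map h H (x \<ominus>\<^bsub>grp_alg G\<^esub> x0) = grp_alg_map h H x0 \<ominus>\<^bsub>grp_alg H\<^esub> grp_alg_map h H x0"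
      by (simp only: alg_map_minus[OF x x0c] e)
    also have "\<dots> = \<zero>\<^bsub>grp_alg H\<^esub>" using RH.r_neg[OF alg_map_closed[OF x0c]] by (simp add: a_minus_def)
    finally have "x \<ominus>\<^bsub>grp_alg G\<^esub> x0 \<in> core" by (rule alg_map_kernel_core[rotated]) (use x x0c in simp)
    hence "(x \<ominus>\<^bsub>grp_alg G\<^esub> x0) \<oplus>\<^bsub>grp_alg G\<^esub> x0 \<in> core" using core_add x0 by blast
    thus ?thesis using R.minus_add_cancel[OF x x0c] by simp
  qed
  thus ?thesis using alg_map_closed[OF x0c] by (auto simp: core_image_def)
qed

lemma core_imageE:
  assumes z: "z \<in> core_image"
  obtains x where "x \<in> core" "grp_alg_map h H x = z"
proof -
  have zc: "z \<in> carrier (grp_alg H)" using z by (simp add: core_image_def)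
  obtain x where "x \<in> carrier (grp_alg G :: ('a \<Rightarrow> 'k) ring)" "grp_alg_map h H x = z"
    using alg_map_surj[OF surj zc] by blast
  thus ?thesis using z that by (auto simp: core_image_def)
qed

lemma ideal_core_image: "ideal core_image (grp_alg H)"
proof (rule RH.idealI_closed)
  show "core_image \<subseteq> carrier (grp_alg H)" by (auto simp: core_image_def)
  show "\<zero>\<^bsub>grp_alg H\<^esub> \<in> core_image"
    using core_imageI[OF core_comm_ideal[OF IG.I_zero_closed]] by (metis alg_map_zero)
next
  fix a b :: "'c \<Rightarrow> 'k" assume a: "a \<in> core_image" and b: "b \<in> core_image"
  obtain x where x: "x \<in> core" "grp_alg_map h H x = a" using core_imageE[OF a] by blast
  obtain y where y: "y \<in> core" "grp_alg_map h H y = b" using core_imageE[OF b] by blast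
  show "a \<oplus>\<^bsub>grp_alg H\<^esub> b \<in> core_image"
    using core_imageI[OF core_add[OF x(1) y(1)]] alg_map_add[OF core_carrier[OF x(1)] core_carrier[OF y(1)]] x y
    by simp
next
  fix a :: "'c \<Rightarrow> 'k" assume a: "a \<in> core_image"
  obtain x where x: "x \<in> core" "grp_alg_map h H x = a" using core_imageE[OF a] by blast
  show "\<ominus>\<^bsub>grp_alg H\<^esub> a \<in> core_image"
    using core_imageI[OF core_neg[OF x(1)]] alg_map_neg[OF core_carrier[OF x(1)]] x by simp
next
  fix a c :: "'c \<Rightarrow> 'k" assume a: "a \<in> core_image" and c: "c \<in> carrier (grp_alg H)"
  obtain x where x: "x \<in> core" "grp_alg_map h H x = a" using core_imageE[OF a] by blast
  obtain y where y: "y \<in> carrier (grp_alg G)" "grp_alg_map h H y = c" using alg_map_surj[OF surj c] by blast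
  show "c \<otimes>\<^bsub>grp_alg H\<^esub> a \<in> core_image"
    using core_imageI[OF core_lmult[OF x(1) y(1)]] alg_map_mult[OF y(1) core_carrier[OF x(1)]] x y by simp
  show "a \<otimes>\<^bsub>grp_alg H\<^esub> c \<in> core_image"
    using core_imageI[OF core_rmult[OF x(1) y(1)]] alg_map_mult[OF core_carrier[OF x(1)] y(1)] x y by simp
qed

lemma comm_ideal_core_image: "comm_ideal H \<subseteq> core_image"
  unfolding comm_ideal_def
proof (rule RH.genideal_minimal[OF ideal_core_image], clarify)
  fix a b :: "'c \<Rightarrow> 'k"
  assume a: "a \<in> carrier (grp_alg H)" and b: "b \<in> carrier (grp_alg H)" and bs: "grp_star H b = b"
  obtain x where x: "x \<in> carrier (grp_alg G)" "grp_alg_map h H x = a" using alg_map_surj[OF surj a] by blast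
  obtain y where y: "y \<in> carrier (grp_alg G)" "grp_alg_map h H y = b" using alg_map_surj[OF surj b] by blast
  define y' where "y' = sym_part G y"
  have y'c: "y' \<in> carrier (grp_alg G)" unfolding y'_def by (rule sym_part_closed[OF G.is_group y(1)])
  have y's: "grp_star G y' = y'" unfolding y'_def by (rule grp_star_sym_part[OF G.is_group y(1)])
  have my': "grp_alg_map h H y' = b"
    unfolding y'_def using alg_map_sym_part[OF y(1)] y(2) sym_part_fixed[OF H.is_group b bs] by simp
  have "x \<otimes>\<^bsub>grp_alg G\<^esub> y' \<ominus>\<^bsub>grp_alg G\<^esub> y' \<otimes>\<^bsub>grp_alg G\<^esub> x \<in> comm_ideal G"
    by (rule commutator_in_comm_ideal[OF G.is_group x(1) y'c y's])
  hence "grp_alg_map h H (x \<otimes>\<^bsub>grp_alg G\<^esub> y' \<ominus>\<^bsub>grp_alg G\<^esub> y' \<otimes>\<^bsub>grp_alg G\<^esub> x) \<in> core_image"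
    by (rule core_imageI[OF core_comm_ideal])
  thus "a \<otimes>\<^bsub>grp_alg H\<^esub> b \<ominus>\<^bsub>grp_alg H\<^esub> b \<otimes>\<^bsub>grp_alg H\<^esub> a \<in> core_image"
    by (simp add: alg_map_minus alg_map_mult x y'c my')
qed

text \<open>Conclusion: a symmetric representative x of an element of ker f^# has f x \<in> I_H,
  so x \<in> core \<subseteq> symJ, and its class, being its own symmetrisation, lies in J.\<close>

lemma sharp_kernel_subset: "sharp_kernel h G H \<subseteq> J"
proof
  fix U :: "('a \<Rightarrow> 'k) set" assume U: "U \<in> sharp_kernel h G H"
  obtain x where x: "x \<in> carrier (grp_alg G)" "U = A_cls G x" "grp_star G x = x"
    "grp_alg_map h H x \<in> comm_ideal H"
    using sharp_kernelD[OF U] by blast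
  have "grp_alg_map h H x \<in> core_image" using x(4) comm_ideal_core_image by blast
  hence "x \<in> symJ" using x(1) core_symJ by (auto simp: core_image_def)
  hence "A_cls G (sym_part G x) \<in> J" by (simp add: symJ_def)
  thus "U \<in> J" using sym_part_fixed[OF G.is_group x(1) x(3)] x(2) by simp
qed

end

theorem mainTheorem3:
  fixes G :: "('g, 'm) monoid_scheme" and H :: "('h, 'n) monoid_scheme"
    and f :: "'g \<Rightarrow> 'h" and L :: "'g set"
  assumes "group G" and "group H"
    and "f \<in> hom G H" and "f ` carrier G = carrier H"
    and "L \<subseteq> kernel G H f"
    and "normal_closure G L = kernel G H f"
  shows "(sharp_kernel f G H :: ('g \<Rightarrow> 'k::field_char_0) set set) = sharp_ideal G L"
proof
  have f: "group_hom G H f"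
    using assms(1-3) by (simp add: group_hom_def group_hom_axioms_def)
  show "sharp_ideal G L \<subseteq> (sharp_kernel f G H :: ('g \<Rightarrow> 'k) set set)"
    by (rule group_hom.sharp_ideal_subset_kernel[OF f assms(5)])
  have "kernel_in_ideal G H f L (sharp_ideal G L :: ('g \<Rightarrow> 'k) set set)"
    by (intro kernel_in_ideal.intro kernel_in_ideal_axioms.intro f assms(4-6)
        group_hom.ideal_sharp_ideal[OF f assms(5)] sharp_gens_subset_sharp_ideal)
  thus "(sharp_kernel f G H :: ('g \<Rightarrow> 'k) set set) \<subseteq> sharp_ideal G L"
    by (rule kernel_in_ideal.sharp_kernel_subset)
qed

end
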